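(* Let $p=q=3$ and let $\mathcal V_{\mathrm{phys}}$ and the operators $\hat A_{ij},\hat B_{ij},\hat C_{ij}$ be as in the context. If $W\subset\mathcal V_{\mathrm{phys}}$ is a linear subspace, $W\neq\{0\}$, invariant under all $\hat A_{ij},\hat B_{ij},\hat C_{ij}$, then $W=\mathcal V_{\mathrm{phys}}$.
   Context: On smooth functions of $(\boldsymbol u,\boldsymbol v)\in\mathbb{R}^3\times\mathbb{R}^3$ define $\hat A_{ij}=-i(u_i\partial_{u_j}-u_j\partial_{u_i})$, $\hat B_{ij}=-i(v_i\partial_{v_j}-v_j\partial_{v_i})$, $\hat C_{ij}=u_iv_j+\partial_{u_i}\partial_{v_j}$ for $1\le i,j\le3$. With $u=|\boldsymbol u|$, $v=|\boldsymbol v|$, let $\Psi_{lmn}=j_l(uv)Y_{lm}(\boldsymbol u/u)Y_{ln}(\boldsymbol v/v)$ for integers $l\ge0$, $|m|\le l$, $|n|\le l$, where $j_l$ is the spherical Bessel function of the first kind and $Y_{lm}$ are the standard orthonormal spherical harmonics on $S^2$ (Condon–Shortley phase convention). Let $\mathcal V_{\mathrm{phys}}=\mathrm{span}\{\Psi_{lmn}\}$ (a space invariant under the operators above). *)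

theory Defs
  imports "HOL-Analysis.Analysis" "HOL-Computational_Algebra.Polynomial"
begin

type_synonym phasefun = "real^3 \<Rightarrow> real^3 \<Rightarrow> complex"

definition pdu :: "3 \<Rightarrow> phasefun \<Rightarrow> phasefun" where
  "pdu j f = (\<lambda>u v. vector_derivative (\<lambda>t::real. f (u + t *\<^sub>R axis j 1) v) (at 0))"

definition pdv :: "3 \<Rightarrow> phasefun \<Rightarrow> phasefun" where
  "pdv j f = (\<lambda>u v. vector_derivative (\<lambda>t::real. f u (v + t *\<^sub>R axis j 1)) (at 0))"

definition opA :: "3 \<Rightarrow> 3 \<Rightarrow> phasefun \<Rightarrow> phasefun" where
  "opA i j f = (\<lambda>u v. - \<i> * (complex_of_real (u$i) * pdu j f u v - complex_of_real (u$j) * pdu i f u v))"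

definition opB :: "3 \<Rightarrow> 3 \<Rightarrow> phasefun \<Rightarrow> phasefun" where
  "opB i j f = (\<lambda>u v. - \<i> * (complex_of_real (v$i) * pdv j f u v - complex_of_real (v$j) * pdv i f u v))"

definition opC :: "3 \<Rightarrow> 3 \<Rightarrow> phasefun \<Rightarrow> phasefun" where
  "opC i j f = (\<lambda>u v. complex_of_real (u$i * v$j) * f u v + pdu i (pdv j f) u v)"

definition sph_bessel_j :: "nat \<Rightarrow> real \<Rightarrow> real" where
  "sph_bessel_j l x = (\<Sum>k. 2 ^ l * (-1) ^ k * fact (k + l) * x ^ (2 * k + l)
                             / (fact k * fact (2 * k + 2 * l + 1)))"

text \<open>m-th derivative of the Legendre polynomial P_l (Rodrigues' formula):
  P_l = 1/(2^l l!) d^l/dt^l (t^2-1)^l.\<close>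
definition legendre_deriv_poly :: "nat \<Rightarrow> nat \<Rightarrow> real poly" where
  "legendre_deriv_poly l m = smult (1 / (2 ^ l * fact l)) ((pderiv ^^ (l + m)) ([:-1, 0, 1:] ^ l))"

text \<open>Standard orthonormal spherical harmonics (Condon-Shortley phase), written as
  functions of a unit direction x = (x1,x2,x3), with cos theta = x3 and
  sin theta e^(i phi) = x1 + i x2:
  Y_lm = (-1)^m N_lm (x1 + i x2)^m P_l^(m)(x3)  for m \<ge> 0,
  Y_l,-k = (-1)^k conj(Y_lk) = N_lk (x1 - i x2)^k P_l^(k)(x3),
  N_lk = sqrt((2l+1)/(4 pi) (l-k)!/(l+k)!).\<close>
definition sph_norm :: "nat \<Rightarrow> nat \<Rightarrow> real" where
  "sph_norm l k = sqrt ((2 * real l + 1) / (4 * pi) * fact (l - k) / fact (l + k))"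

definition sph_harm :: "nat \<Rightarrow> int \<Rightarrow> real^3 \<Rightarrow> complex" where
  "sph_harm l m x =
    (if m \<ge> 0 then
       (-1) ^ nat m * complex_of_real (sph_norm l (nat m))
         * (Complex (x$1) (x$2)) ^ nat m
         * complex_of_real (poly (legendre_deriv_poly l (nat m)) (x$3))
     else
       complex_of_real (sph_norm l (nat (- m)))
         * (Complex (x$1) (- (x$2))) ^ nat (- m)
         * complex_of_real (poly (legendre_deriv_poly l (nat (- m))) (x$3)))"

definition Psi :: "nat \<Rightarrow> int \<Rightarrow> int \<Rightarrow> phasefun" where
  "Psi l m n = (\<lambda>u v. complex_of_real (sph_bessel_j l (norm u * norm v))
                       * sph_harm l m (u /\<^sub>R norm u) * sph_harm l n (v /\<^sub>R norm v))"

definition Psi_index :: "(nat \<times> int \<times> int) set" where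
  "Psi_index = {(l, m, n). \<bar>m\<bar> \<le> int l \<and> \<bar>n\<bar> \<le> int l}"

definition V_phys :: "phasefun set" where
  "V_phys = {f. \<exists>S c. finite S \<and> S \<subseteq> Psi_index \<and>
       f = (\<lambda>u v. \<Sum>(l, m, n)\<in>S. c (l, m, n) * Psi l m n u v)}"

definition complex_subspace :: "phasefun set \<Rightarrow> bool" where
  "complex_subspace W \<longleftrightarrow> (\<lambda>u v. 0) \<in> W \<and>
     (\<forall>f\<in>W. \<forall>g\<in>W. (\<lambda>u v. f u v + g u v) \<in> W) \<and>
     (\<forall>c. \<forall>f\<in>W. (\<lambda>u v. c * f u v) \<in> W)"

end

(*
  The angular momenta opA and opB act on the basis Psi_lmn by the familiar ladder relations:
  Psi_lmn is j_l(|u| |v|) times spherical harmonics in u/|u| and v/|v|, and these operators only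
  see the angular parts.  The operators L3 = opA 1 2, M3 = opB 1 2 and L+ L- act diagonally,
  with eigenvalues m, n and (l + m)(l - m + 1), which separate the basis.  Projecting a nonzero
  element of W onto a joint eigenspace by polynomials in these operators therefore puts a single
  Psi_lmn into W, and the ladder operators then give every Psi_lm'n'.  In particular W contains
  the top state Psi_lll, a multiple of F_l = g_l(|u|^2 |v|^2) (u1 + i u2)^l (v1 + i v2)^l, where
  j_l(x) = x^l g_l(x^2).  The combinations C+ and C- of the operators opC shift l: C+ F_l is a
  multiple of F_(l+1), and C- F_(l+1) is a combination of F_l and Psi_(l+2,l,l).  Hence W
  contains every F_l and thus every Psi_lmn.
*)

theory Submission
  imports Defs
begin

section \<open>Spherical Bessel functions\<close>

definition bessel_coeff :: "nat \<Rightarrow> nat \<Rightarrow> real" where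
  "bessel_coeff l k = 2 ^ l * (-1) ^ k * fact (k + l) / (fact k * fact (2 * k + 2 * l + 1))"

definition bessel_g :: "nat \<Rightarrow> real \<Rightarrow> real" where
  "bessel_g l s = (\<Sum>k. bessel_coeff l k * s ^ k)"

lemma abs_bessel_coeff_le: "\<bar>bessel_coeff l k\<bar> \<le> 2 ^ l / fact k"
proof -
  have "fact (k + l) \<le> (fact (2 * k + 2 * l + 1) :: real)"
    by (intro fact_mono) auto
  then have "2 ^ l * (fact (k + l) / fact (2 * k + 2 * l + 1)) / fact k \<le> (2 ^ l * 1 / fact k :: real)"
    by (intro divide_right_mono mult_left_mono) (auto simp: divide_le_eq)
  then show ?thesis
    unfolding bessel_coeff_def by (simp add: abs_mult power_abs field_simps)
qed

lemma summable_bessel_g: "summable (\<lambda>k. bessel_coeff l k * s ^ k)"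
proof (rule summable_comparison_test)
  have "\<bar>bessel_coeff l k\<bar> * \<bar>s\<bar> ^ k \<le> 2 ^ l / fact k * \<bar>s\<bar> ^ k" for k
    by (intro mult_right_mono abs_bessel_coeff_le) auto
  then show "\<exists>N. \<forall>k\<ge>N. norm (bessel_coeff l k * s ^ k) \<le> 2 ^ l * (inverse (fact k) * \<bar>s\<bar> ^ k)"
    by (auto simp: abs_mult power_abs divide_inverse mult.assoc)
  show "summable (\<lambda>k. 2 ^ l * (inverse (fact k) * \<bar>s\<bar> ^ k))"
    by (intro summable_mult summable_exp)
qed

lemma sph_bessel_j_eq_bessel_g: "sph_bessel_j l x = x ^ l * bessel_g l (x\<^sup>2)"
proof -
  have "sph_bessel_j l x = (\<Sum>k. x ^ l * (bessel_coeff l k * (x\<^sup>2) ^ k))"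
    unfolding sph_bessel_j_def bessel_coeff_def
    by (simp add: power_add power_mult field_simps flip: power_mult)
  also have "\<dots> = x ^ l * bessel_g l (x\<^sup>2)"
    unfolding bessel_g_def by (intro suminf_mult summable_bessel_g)
  finally show ?thesis .
qed

lemma bessel_coeff_Suc_order:
  "bessel_coeff (Suc l) k = bessel_coeff l k / real (2 * k + 2 * l + 3)"
proof -
  define A B p t where "A = (fact (k + l) :: real)" and "B = (fact (2 * k + 2 * l + 1) :: real)"
    and "p = real (2 * k + 2 * l + 3)" and "t = real (k + l + 1)"
  have pos: "A > 0" "B > 0" "p > 0" "t > 0"
    by (simp_all add: A_def B_def p_def t_def)
  have fact1: "(fact (k + Suc l) :: real) = t * A"
    by (simp add: A_def t_def fact_Suc)
  have fact2: "(fact (2 * k + 2 * Suc l + 1) :: real) = p * (2 * t) * B"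
    by (simp add: B_def p_def t_def fact_Suc algebra_simps)
  show ?thesis
    unfolding bessel_coeff_def fact1 fact2 A_def[symmetric] B_def[symmetric] p_def[symmetric]
    using pos by (simp add: field_simps)
qed

lemma bessel_coeff_Suc:
  "bessel_coeff l (Suc k) = - bessel_coeff l k / (2 * real (Suc k) * real (2 * k + 2 * l + 3))"
proof -
  define A B C p t r where "A = (fact (k + l) :: real)" and "B = (fact (2 * k + 2 * l + 1) :: real)"
    and "C = (fact k :: real)" and "p = real (2 * k + 2 * l + 3)" and "t = real (k + l + 1)"
    and "r = real (Suc k)"
  have pos: "A > 0" "B > 0" "C > 0" "p > 0" "t > 0" "r > 0"
    by (simp_all add: A_def B_def C_def p_def t_def r_def)
  have fact1: "(fact (Suc k + l) :: real) = t * A"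
    by (simp add: A_def t_def fact_Suc)
  have fact2: "(fact (2 * Suc k + 2 * l + 1) :: real) = p * (2 * t) * B"
    by (simp add: B_def p_def t_def fact_Suc algebra_simps)
  have fact3: "(fact (Suc k) :: real) = r * C"
    by (simp add: C_def r_def)
  show ?thesis
    unfolding bessel_coeff_def fact1 fact2 fact3 A_def[symmetric] B_def[symmetric] C_def[symmetric]
      p_def[symmetric] r_def[symmetric]
    using pos by (simp add: field_simps)
qed

lemma diffs_bessel_coeff: "diffs (bessel_coeff l) = (\<lambda>k. - bessel_coeff (Suc l) k / 2)"
proof
  fix k
  define p where "p = real (2 * k + 2 * l + 3)"
  define r where "r = real (Suc k)"
  have "p > 0" "r > 0"
    by (simp_all add: p_def r_def)
  then show "diffs (bessel_coeff l) k = - bessel_coeff (Suc l) k / 2"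
    unfolding diffs_def bessel_coeff_Suc bessel_coeff_Suc_order p_def[symmetric] r_def[symmetric]
      of_nat_mult[symmetric]
    by (simp add: field_simps)
qed

lemma bessel_g_has_real_derivative:
  "(bessel_g l has_real_derivative - bessel_g (Suc l) s / 2) (at s)"
proof -
  have "(bessel_g l has_real_derivative (\<Sum>k. diffs (bessel_coeff l) k * s ^ k)) (at s)"
    unfolding bessel_g_def[abs_def]
    by (intro termdiffs_strong_converges_everywhere summable_bessel_g)
  also have "(\<Sum>k. diffs (bessel_coeff l) k * s ^ k) = (\<Sum>k. - (1/2) * (bessel_coeff (Suc l) k * s ^ k))"
    by (simp add: diffs_bessel_coeff)
  also have "\<dots> = - bessel_g (Suc l) s / 2"
    unfolding bessel_g_def by (subst suminf_mult) (simp_all add: summable_bessel_g)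
  finally show ?thesis .
qed

lemma bessel_coeff_recurrence:
  "bessel_coeff l (Suc k) = real (2 * l + 3) * bessel_coeff (Suc l) (Suc k) - bessel_coeff (Suc (Suc l)) k"
proof -
  define p where "p = real (2 * k + 2 * l + 3)"
  define q where "q = real (2 * k + 2 * l + 5)"
  define r where "r = real (Suc k)"
  have pos: "p > 0" "q > 0" "r > 0"
    by (simp_all add: p_def q_def r_def)
  have q: "real (2 * l + 3) = q - 2 * r"
    by (simp add: q_def r_def)
  have c1: "bessel_coeff (Suc (Suc l)) k = bessel_coeff l k / p / q"
    unfolding bessel_coeff_Suc_order p_def q_def by (simp add: algebra_simps)
  have c2: "bessel_coeff (Suc l) (Suc k) = bessel_coeff l (Suc k) / q"
    unfolding bessel_coeff_Suc_order q_def by (simp add: algebra_simps)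
  have c3: "bessel_coeff l (Suc k) = - bessel_coeff l k / (2 * r * p)"
    unfolding bessel_coeff_Suc p_def r_def ..
  show ?thesis
    unfolding c1 c2 unfolding c3 q using pos by (simp add: field_simps)
qed

text \<open>The recurrence \<open>j\<^sub>l\<^sub>-\<^sub>1(x) + j\<^sub>l\<^sub>+\<^sub>1(x) = (2l + 1) j\<^sub>l(x) / x\<close>, shifted in \<open>l\<close>.\<close>
lemma bessel_g_recurrence:
  "bessel_g l s = real (2 * l + 3) * bessel_g (Suc l) s - s * bessel_g (Suc (Suc l)) s"
proof -
  let ?a = "\<lambda>k. real (2 * l + 3) * (bessel_coeff (Suc l) k * s ^ k)"
  let ?b = "\<lambda>k. s * (bessel_coeff (Suc (Suc l)) k * s ^ k)"
  have "(\<lambda>k. ?a k - (if k = 0 then 0 else ?b (k - 1))) sums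
      (real (2 * l + 3) * bessel_g (Suc l) s - s * bessel_g (Suc (Suc l)) s)"
  proof (rule sums_diff)
    show "?a sums (real (2 * l + 3) * bessel_g (Suc l) s)"
      unfolding bessel_g_def by (intro sums_mult summable_sums summable_bessel_g)
    have "?b sums (s * bessel_g (Suc (Suc l)) s)"
      unfolding bessel_g_def by (intro sums_mult summable_sums summable_bessel_g)
    then show "(\<lambda>k. if k = 0 then 0 else ?b (k - 1)) sums (s * bessel_g (Suc (Suc l)) s)"
      using sums_Suc_iff[of "\<lambda>k. if k = 0 then 0 else ?b (k - 1)"] by simp
  qed
  moreover have "?a k - (if k = 0 then 0 else ?b (k - 1)) = bessel_coeff l k * s ^ k" for k
  proof (cases k)
    case 0
    then show ?thesis by (simp add: bessel_coeff_Suc_order)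
  next
    case (Suc k')
    then show ?thesis by (simp add: bessel_coeff_recurrence[of l k'] algebra_simps)
  qed
  ultimately show ?thesis
    unfolding bessel_g_def[of l] by (simp add: sums_iff)
qed

section \<open>Derivatives of Legendre polynomials\<close>

lemma pderiv_funpow_eq_0: "degree (p :: 'a::field_char_0 poly) < k \<Longrightarrow> (pderiv ^^ k) p = 0"
proof (induction k arbitrary: p)
  case (Suc k)
  show ?case
  proof (cases "degree p = 0")
    case True
    then have "pderiv p = 0"
      by (simp add: pderiv_eq_0_iff)
    then show ?thesis
      by (induction k) (simp_all add: funpow_Suc_right del: funpow.simps)
  next
    case False
    then have "(pderiv ^^ k) (pderiv p) = 0"
      using Suc by (intro Suc.IH) (simp add: degree_pderiv)
    then show ?thesis
      by (simp add: funpow_Suc_right del: funpow.simps)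
  qed
qed simp

lemma pderiv_funpow_degree:
  "degree (p :: 'a::field_char_0 poly) = k \<Longrightarrow> (pderiv ^^ k) p = [:fact k * lead_coeff p:]"
proof (induction k arbitrary: p)
  case 0
  then show ?case by (auto elim!: degree_eq_zeroE)
next
  case (Suc k)
  have "(pderiv ^^ Suc k) p = (pderiv ^^ k) (pderiv p)"
    by (simp add: funpow_Suc_right del: funpow.simps)
  also have "\<dots> = [:fact k * lead_coeff (pderiv p):]"
    using Suc by (intro Suc.IH) (simp add: degree_pderiv)
  also have "lead_coeff (pderiv p) = of_nat (Suc k) * lead_coeff p"
    using Suc.prems by (simp add: coeff_pderiv degree_pderiv)
  finally show ?case
    by (simp add: algebra_simps)
qed

lemma degree_rodrigues_poly: "degree ([:-1, 0, 1:] ^ l :: real poly) = 2 * l"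
  by (simp add: degree_power_eq)

lemma legendre_deriv_poly_eq_0: "l < m \<Longrightarrow> legendre_deriv_poly l m = 0"
  unfolding legendre_deriv_poly_def
  by (subst pderiv_funpow_eq_0) (auto simp: degree_rodrigues_poly)

definition legendre_top :: "nat \<Rightarrow> real" where
  "legendre_top l = fact (2 * l) / (2 ^ l * fact l)"

lemma legendre_top_pos: "legendre_top l > 0"
  by (simp add: legendre_top_def)

lemma poly_legendre_deriv_poly_top: "poly (legendre_deriv_poly l l) t = legendre_top l"
proof -
  have "(pderiv ^^ (l + l)) ([:-1, 0, 1:] ^ l) = [:fact (l + l) * lead_coeff ([:-1, 0, 1:] ^ l :: real poly):]"
    by (rule pderiv_funpow_degree) (simp add: degree_rodrigues_poly)
  then show ?thesis
    by (simp add: legendre_deriv_poly_def legendre_top_def lead_coeff_power mult_2)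
qed

lemma pderiv_legendre_deriv_poly:
  "pderiv (legendre_deriv_poly l m) = legendre_deriv_poly l (Suc m)"
  unfolding legendre_deriv_poly_def by (simp add: pderiv_smult)

text \<open>Differentiating \<open>(t\<^sup>2 - 1) Q' = 2 l t Q\<close>, \<open>Q = (t\<^sup>2 - 1)\<^sup>l\<close>, \<open>k + 1\<close> times (Leibniz rule).\<close>
lemma rodrigues_derivative_ode:
  fixes l k :: nat
  defines "D j \<equiv> (pderiv ^^ j) ([:-1, 0, 1:] ^ l :: real poly)"
  defines "T j \<equiv> [:-1, 0, 1:] * D (j + 2) + smult (2 * (real j + 1 - real l)) ([:0, 1:] * D (j + 1))
      + smult ((real j + 1) * (real j - 2 * real l)) (D j)"
  shows "T k = 0"
proof (induction k)
  case 0
  have "[:-1, 0, 1:] * pderiv ([:-1, 0, 1:] ^ l) = smult (2 * real l) ([:0, 1:] * [:-1, 0, 1:] ^ l)"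
  proof (cases l)
    case (Suc n)
    show ?thesis
      unfolding Suc pderiv_power_Suc
      by (intro poly_eq_poly_eq_iff[THEN iffD1] ext) (simp add: pderiv_pCons algebra_simps)
  qed simp
  from arg_cong[OF this, of "\<lambda>p. poly (pderiv p) x" for x] show ?case
    unfolding T_def D_def
    by (intro poly_eq_poly_eq_iff[THEN iffD1] ext)
      (simp add: pderiv_mult pderiv_smult pderiv_pCons pderiv_diff pderiv_minus numeral_2_eq_2
        algebra_simps)
next
  case (Suc k)
  have "T (Suc k) = pderiv (T k)"
    unfolding T_def D_def
    by (intro poly_eq_poly_eq_iff[THEN iffD1] ext)
      (simp add: pderiv_mult pderiv_smult pderiv_add pderiv_pCons pderiv_diff pderiv_minus
        algebra_simps)
  with Suc show ?case
    by simp
qed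

lemma legendre_deriv_poly_ladder:
  assumes "m \<ge> 1"
  shows "(1 - t\<^sup>2) * poly (legendre_deriv_poly l (Suc m)) t - 2 * real m * t * poly (legendre_deriv_poly l m) t
       = - ((real l + real m) * (real l - real m + 1)) * poly (legendre_deriv_poly l (m - 1)) t"
proof -
  define D where "D j = (pderiv ^^ j) ([:-1, 0, 1:] ^ l :: real poly)" for j
  obtain k where k: "l + m = Suc k"
    using assms by (cases "l + m") auto
  then have idx: "l + Suc m = k + 2" "l + m = k + 1" "l + (m - 1) = k" and m: "real m = real k + 1 - real l"
    using assms by auto
  have "poly ([:-1, 0, 1:] * D (k + 2) + smult (2 * (real k + 1 - real l)) ([:0, 1:] * D (k + 1))
      + smult ((real k + 1) * (real k - 2 * real l)) (D k)) t = 0"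
    unfolding D_def by (simp only: rodrigues_derivative_ode poly_0)
  then have "(1 - t\<^sup>2) * poly (D (k + 2)) t - 2 * real m * t * poly (D (k + 1)) t
      = - ((real l + real m) * (real l - real m + 1)) * poly (D k) t"
    unfolding m by (simp add: algebra_simps power2_eq_square)
  from arg_cong[OF this, of "\<lambda>z. z / (2 ^ l * fact l)"] show ?thesis
    unfolding legendre_deriv_poly_def idx poly_smult D_def[symmetric]
    by (simp add: algebra_simps add_divide_distrib diff_divide_distrib)
qed

lemma poly_legendre_deriv_poly_pred:
  "poly (legendre_deriv_poly (Suc l) l) t = t * legendre_top (Suc l)"
proof -
  have "(1 - t\<^sup>2) * poly (legendre_deriv_poly (Suc l) (Suc (Suc l))) t
      - 2 * real (Suc l) * t * poly (legendre_deriv_poly (Suc l) (Suc l)) t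
      = - ((real (Suc l) + real (Suc l)) * (real (Suc l) - real (Suc l) + 1))
        * poly (legendre_deriv_poly (Suc l) (Suc l - 1)) t"
    by (rule legendre_deriv_poly_ladder) simp
  then have "2 * real (Suc l) * poly (legendre_deriv_poly (Suc l) l) t
      = 2 * real (Suc l) * (t * legendre_top (Suc l))"
    by (simp add: legendre_deriv_poly_eq_0 poly_legendre_deriv_poly_top algebra_simps)
  then show ?thesis
    by simp
qed

lemma poly_legendre_deriv_poly_pred2:
  "poly (legendre_deriv_poly (Suc (Suc k)) k) t
     = legendre_top (Suc (Suc k)) / (2 * real (2 * k + 3)) * (real (2 * k + 3) * t\<^sup>2 - 1)"
proof -
  have "(1 - t\<^sup>2) * poly (legendre_deriv_poly (Suc (Suc k)) (Suc (Suc k))) t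
      - 2 * real (Suc k) * t * poly (legendre_deriv_poly (Suc (Suc k)) (Suc k)) t
      = - ((real (Suc (Suc k)) + real (Suc k)) * (real (Suc (Suc k)) - real (Suc k) + 1))
        * poly (legendre_deriv_poly (Suc (Suc k)) (Suc k - 1)) t"
    by (rule legendre_deriv_poly_ladder) simp
  then have "(1 - t\<^sup>2) * legendre_top (Suc (Suc k)) - 2 * real (Suc k) * t * (t * legendre_top (Suc (Suc k)))
      = - (real (2 * k + 3) * 2) * poly (legendre_deriv_poly (Suc (Suc k)) k) t"
    by (simp add: poly_legendre_deriv_poly_top poly_legendre_deriv_poly_pred algebra_simps)
  then show ?thesis
    by (simp add: field_simps power2_eq_square)
qed

section \<open>Partial derivatives and angular momentum\<close>

lemma pdu_eq_derivative:
  assumes "((\<lambda>x. f x v) has_derivative f') (at u)"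
  shows "pdu j f u v = f' (axis j 1)"
proof -
  have line: "((\<lambda>t::real. u + t *\<^sub>R axis j 1) has_derivative (\<lambda>t. t *\<^sub>R axis j 1)) (at 0)"
    by (rule derivative_eq_intros refl)+ simp
  have "((\<lambda>t. f (u + t *\<^sub>R axis j 1) v) has_derivative (\<lambda>t. f' (t *\<^sub>R axis j 1))) (at 0)"
    using diff_chain_at[OF line] assms by (simp add: o_def)
  moreover have "(\<lambda>t. f' (t *\<^sub>R axis j 1)) = (\<lambda>t. t *\<^sub>R f' (axis j 1))"
    using has_derivative_bounded_linear[OF assms] by (simp add: linear_simps bounded_linear.linear)
  ultimately have "((\<lambda>t. f (u + t *\<^sub>R axis j 1) v) has_vector_derivative f' (axis j 1)) (at 0)"
    by (simp add: has_vector_derivative_def)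
  then show ?thesis
    unfolding pdu_def by (rule vector_derivative_at)
qed

lemma pdv_eq_derivative:
  assumes "((\<lambda>y. f u y) has_derivative f') (at v)"
  shows "pdv j f u v = f' (axis j 1)"
proof -
  have "pdv j f u v = pdu j (\<lambda>a b. f b a) v u"
    unfolding pdu_def pdv_def ..
  also have "\<dots> = f' (axis j 1)"
    by (rule pdu_eq_derivative) (use assms in simp)
  finally show ?thesis .
qed

lemma opA_at_origin: "opA i j f 0 v = 0"
  by (simp add: opA_def)

definition swap_args :: "phasefun \<Rightarrow> phasefun" where
  "swap_args f = (\<lambda>u v. f v u)"

lemma opB_eq_opA_swap_args: "opB i j f u v = opA i j (swap_args f) v u"
  unfolding opB_def opA_def pdu_def pdv_def swap_args_def ..

text \<open>With \<open>R = opA\<close> (or \<open>opB\<close>), \<open>R 2 3\<close>, \<open>R 3 1\<close>, \<open>R 1 2\<close> are the angular momentum components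
  \<open>L\<^sub>1, L\<^sub>2, L\<^sub>3\<close> in \<open>u\<close> (or \<open>v\<close>); these are the ladder operators \<open>L\<^sub>1 \<plusminus> i L\<^sub>2\<close>.\<close>
definition ang_raise :: "(3 \<Rightarrow> 3 \<Rightarrow> phasefun \<Rightarrow> phasefun) \<Rightarrow> phasefun \<Rightarrow> phasefun" where
  "ang_raise R f = (\<lambda>u v. R 2 3 f u v + \<i> * R 3 1 f u v)"

definition ang_lower :: "(3 \<Rightarrow> 3 \<Rightarrow> phasefun \<Rightarrow> phasefun) \<Rightarrow> phasefun \<Rightarrow> phasefun" where
  "ang_lower R f = (\<lambda>u v. R 2 3 f u v - \<i> * R 3 1 f u v)"

lemma ang_raise_opA_origin: "ang_raise opA f 0 v = 0"
  by (simp add: ang_raise_def opA_at_origin)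

lemma ang_lower_opA_origin: "ang_lower opA f 0 v = 0"
  by (simp add: ang_lower_def opA_at_origin)

lemma ang_raise_opB_eq_opA: "ang_raise opB f u v = ang_raise opA (swap_args f) v u"
  by (simp add: ang_raise_def opB_eq_opA_swap_args)

lemma ang_lower_opB_eq_opA: "ang_lower opB f u v = ang_lower opA (swap_args f) v u"
  by (simp add: ang_lower_def opB_eq_opA_swap_args)

section \<open>Spherical harmonics\<close>

definition harm_form :: "complex \<Rightarrow> real \<Rightarrow> nat \<Rightarrow> real poly \<Rightarrow> real^3 \<Rightarrow> complex" where
  "harm_form K s k P x = K * Complex (x$1) (s * x$2) ^ k * of_real (poly P (x$3))"

lemma has_derivative_vec_nth: "((\<lambda>x. x $ i) has_derivative (\<lambda>h. h $ i)) F"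
  by (rule bounded_linear_imp_has_derivative) (rule bounded_linear_vec_nth)

lemma has_derivative_Complex_vec_nth:
  "((\<lambda>x::real^3. Complex (x$1) (s * x$2)) has_derivative (\<lambda>h. Complex (h$1) (s * h$2))) F"
  unfolding Complex_eq by (rule derivative_eq_intros has_derivative_vec_nth refl)+

lemma harm_form_has_derivative:
  "(harm_form K s k P has_derivative (\<lambda>h. K * (of_nat k * Complex (h$1) (s * h$2)
      * Complex (x$1) (s * x$2) ^ (k - 1) * of_real (poly P (x$3))
      + Complex (x$1) (s * x$2) ^ k * of_real (h$3 * poly (pderiv P) (x$3))))) (at x)"
proof -
  have P: "((\<lambda>x::real^3. poly P (x$3)) has_derivative (\<lambda>h. h$3 * poly (pderiv P) (x$3))) (at x)"
    by (rule DERIV_compose_FDERIV[OF poly_DERIV has_derivative_vec_nth])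
  show ?thesis
    unfolding harm_form_def[abs_def]
    by (rule derivative_eq_intros has_derivative_Complex_vec_nth P refl)+ (simp add: algebra_simps)
qed

lemma pdu_harm_form:
  fixes x :: "real^3" and s :: real
  defines "w \<equiv> Complex (x$1) (s * x$2)"
  shows "pdu 1 (\<lambda>u v. harm_form K s k P u) x v = K * of_nat k * w ^ (k - 1) * of_real (poly P (x$3))"
    and "pdu 2 (\<lambda>u v. harm_form K s k P u) x v
      = K * of_nat k * (\<i> * of_real s) * w ^ (k - 1) * of_real (poly P (x$3))"
    and "pdu 3 (\<lambda>u v. harm_form K s k P u) x v = K * w ^ k * of_real (poly (pderiv P) (x$3))"
  unfolding w_def
  by (simp_all add: pdu_eq_derivative[OF harm_form_has_derivative] axis_def Complex_eq)

lemma opA_harm_form: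
  fixes x :: "real^3" and s :: real and K :: complex and k :: nat and P :: "real poly"
  defines "w \<equiv> Complex (x$1) (s * x$2)" and "F \<equiv> \<lambda>u v. harm_form K s k P u"
  shows "opA 1 2 F x v = K * of_nat k * w ^ (k - 1) * of_real (poly P (x$3)) * Complex (s * x$1) (x$2)"
    and "ang_raise opA F x v = - Complex (x$1) (x$2) * K * w ^ k * of_real (poly (pderiv P) (x$3))
      + of_real (x$3) * K * of_nat k * (1 - of_real s) * w ^ (k - 1) * of_real (poly P (x$3))"
    and "ang_lower opA F x v = Complex (x$1) (- x$2) * K * w ^ k * of_real (poly (pderiv P) (x$3))
      - of_real (x$3) * K * of_nat k * (1 + of_real s) * w ^ (k - 1) * of_real (poly P (x$3))"
  unfolding F_def w_def ang_raise_def ang_lower_def opA_def pdu_harm_form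
  by (simp_all add: Complex_eq algebra_simps)

lemma sph_harm_nonneg:
  "0 \<le> m \<Longrightarrow> sph_harm l m
     = harm_form ((-1) ^ nat m * of_real (sph_norm l (nat m))) 1 (nat m) (legendre_deriv_poly l (nat m))"
  unfolding sph_harm_def[abs_def] harm_form_def by auto

lemma sph_harm_neg:
  "m < 0 \<Longrightarrow> sph_harm l m
     = harm_form (of_real (sph_norm l (nat (- m)))) (-1) (nat (- m)) (legendre_deriv_poly l (nat (- m)))"
  unfolding sph_harm_def[abs_def] harm_form_def by auto

lemma sph_harm_has_derivative: "\<exists>D. (sph_harm l m has_derivative D) (at x)"
  by (cases "0 \<le> m") (auto simp: sph_harm_nonneg sph_harm_neg intro: harm_form_has_derivative)

lemma sph_harm_eq_0: "l < nat \<bar>m\<bar> \<Longrightarrow> sph_harm l m = (\<lambda>x. 0)"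
  unfolding sph_harm_def by (auto simp: legendre_deriv_poly_eq_0)

lemma sph_norm_pos: "sph_norm l k > 0"
  unfolding sph_norm_def by (intro real_sqrt_gt_zero divide_pos_pos mult_pos_pos) auto

lemma opA_sph_harm: "opA 1 2 (\<lambda>u v. sph_harm l m u) x v = of_int m * sph_harm l m x"
proof (cases "0 \<le> m")
  case True
  then consider "m = 0" | j where "m = int (Suc j)" "nat m = Suc j"
    by (metis nat_0_iff nat_eq_iff2 not0_implies_Suc)
  then show ?thesis
    unfolding sph_harm_nonneg[OF True] opA_harm_form unfolding harm_form_def
    by cases (simp_all add: algebra_simps)
next
  case False
  define j where "j = nat (- m) - 1"
  have j: "nat (- m) = Suc j" "m = - int (Suc j)"
    using False by (simp_all add: j_def)
  have "Complex (- x$1) (x$2) = - Complex (x$1) (- x$2)"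
    by (simp add: complex_eq_iff)
  then show ?thesis
    unfolding sph_harm_neg[OF False[unfolded not_le]] opA_harm_form unfolding harm_form_def j(1)
    by (simp add: j(2) algebra_simps)
qed

definition raise_coeff :: "nat \<Rightarrow> int \<Rightarrow> real" where
  "raise_coeff l m =
    (if 0 \<le> m then sph_norm l (nat m) / sph_norm l (Suc (nat m))
     else sph_norm l (nat (- m)) * (real l + real (nat (- m))) * (real l - real (nat (- m)) + 1)
          / sph_norm l (nat (- m) - 1))"

lemma raise_coeff_nonzero: "\<bar>m\<bar> \<le> int l \<Longrightarrow> raise_coeff l m \<noteq> 0"
  using sph_norm_pos[THEN less_imp_neq] by (auto simp: raise_coeff_def of_nat_diff)

lemma legendre_ladder_sphere:
  fixes x :: "real^3"
  assumes "norm x = 1"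
  shows "of_real ((x$1)\<^sup>2 + (x$2)\<^sup>2) * of_real (poly (legendre_deriv_poly l (Suc (Suc j))) (x$3))
      - 2 * of_nat (Suc j) * of_real (x$3) * of_real (poly (legendre_deriv_poly l (Suc j)) (x$3))
    = - of_real ((real l + real (Suc j)) * (real l - real (Suc j) + 1))
      * (of_real (poly (legendre_deriv_poly l j) (x$3)) :: complex)"
proof -
  have circle: "(x$1)\<^sup>2 + (x$2)\<^sup>2 = 1 - (x$3)\<^sup>2"
    using assms by (simp add: norm_eq_1 inner_vec_def sum_3 power2_eq_square)
  from arg_cong[OF legendre_deriv_poly_ladder[of "Suc j" "x$3" l], of complex_of_real]
  show ?thesis
    unfolding circle by (simp add: algebra_simps)
qed

lemma sph_harm_nonpos:
  "m \<le> 0 \<Longrightarrow> sph_harm l m x = of_real (sph_norm l (nat (- m))) * Complex (x$1) (- x$2) ^ nat (- m)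
     * of_real (poly (legendre_deriv_poly l (nat (- m))) (x$3))"
  unfolding sph_harm_def by auto

lemma Complex_mult_cnj: "Complex a b * Complex a (- b) = of_real (a\<^sup>2 + b\<^sup>2)"
  by (simp add: complex_eq_iff power2_eq_square)

lemma ang_raise_sph_harm_nonneg:
  assumes "0 \<le> m"
  shows "ang_raise opA (\<lambda>u v. sph_harm l m u) x v = of_real (raise_coeff l m) * sph_harm l (m + 1) x"
proof -
  define k where "k = nat m"
  have m1: "0 \<le> m + 1" "nat (m + 1) = Suc k"
    using assms by (auto simp: k_def)
  have lhs: "ang_raise opA (\<lambda>u v. sph_harm l m u) x v
      = - ((-1) ^ k * of_real (sph_norm l k)) * Complex (x$1) (x$2) ^ Suc k
          * of_real (poly (legendre_deriv_poly l (Suc k)) (x$3))"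
    unfolding sph_harm_nonneg[OF assms] opA_harm_form k_def[symmetric] pderiv_legendre_deriv_poly
    by simp
  have rhs: "sph_harm l (m + 1) x = (-1) ^ Suc k * of_real (sph_norm l (Suc k))
      * Complex (x$1) (x$2) ^ Suc k * of_real (poly (legendre_deriv_poly l (Suc k)) (x$3))"
    unfolding sph_harm_nonneg[OF m1(1)] harm_form_def m1(2) by simp
  have coeff: "raise_coeff l m = sph_norm l k / sph_norm l (Suc k)"
    using assms by (simp add: raise_coeff_def k_def)
  show ?thesis
    unfolding lhs rhs coeff using sph_norm_pos[of l "Suc k"] by (simp add: field_simps)
qed

lemma ang_raise_sph_harm_neg:
  fixes x :: "real^3"
  assumes "m < 0" and "norm x = 1"
  shows "ang_raise opA (\<lambda>u v. sph_harm l m u) x v = of_real (raise_coeff l m) * sph_harm l (m + 1) x"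
proof -
  define j where "j = nat (- m) - 1"
  have j: "nat (- m) = Suc j" "nat (- (m + 1)) = j" "m + 1 \<le> 0"
    using assms(1) by (simp_all add: j_def)
  have coeff: "raise_coeff l m = sph_norm l (Suc j) * ((real l + real (Suc j)) * (real l - real (Suc j) + 1))
      / sph_norm l j"
    using assms(1) by (simp add: raise_coeff_def j(1))
  have "ang_raise opA (\<lambda>u v. sph_harm l m u) x v
      = - Complex (x$1) (x$2) * of_real (sph_norm l (Suc j)) * Complex (x$1) (- x$2) ^ Suc j
          * of_real (poly (legendre_deriv_poly l (Suc (Suc j))) (x$3))
        + of_real (x$3) * of_real (sph_norm l (Suc j)) * of_nat (Suc j) * 2 * Complex (x$1) (- x$2) ^ j
          * of_real (poly (legendre_deriv_poly l (Suc j)) (x$3))"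
    unfolding sph_harm_neg[OF assms(1)] opA_harm_form j(1) pderiv_legendre_deriv_poly by simp
  also have "\<dots> = - of_real (sph_norm l (Suc j)) * Complex (x$1) (- x$2) ^ j
      * (of_real ((x$1)\<^sup>2 + (x$2)\<^sup>2) * of_real (poly (legendre_deriv_poly l (Suc (Suc j))) (x$3))
         - 2 * of_nat (Suc j) * of_real (x$3) * of_real (poly (legendre_deriv_poly l (Suc j)) (x$3)))"
    unfolding Complex_mult_cnj[symmetric] by (simp add: algebra_simps)
  also have "\<dots> = of_real (raise_coeff l m) * sph_harm l (m + 1) x"
    unfolding legendre_ladder_sphere[OF assms(2)] coeff sph_harm_nonpos[OF j(3)] j(2)
    using sph_norm_pos[of l j] by (simp add: field_simps)
  finally show ?thesis .
qed

lemma ang_lower_sph_harm_nonpos: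
  assumes "m \<le> 0"
  shows "ang_lower opA (\<lambda>u v. sph_harm l m u) x v
    = of_real (raise_coeff l (- m)) * sph_harm l (m - 1) x"
proof -
  define k where "k = nat (- m)"
  have m1: "m - 1 < 0" "nat (- (m - 1)) = Suc k"
    using assms by (auto simp: k_def)
  have lhs: "ang_lower opA (\<lambda>u v. sph_harm l m u) x v
      = of_real (sph_norm l k) * Complex (x$1) (- x$2) ^ Suc k
        * of_real (poly (legendre_deriv_poly l (Suc k)) (x$3))"
  proof (cases "m = 0")
    case True
    then have "k = 0"
      by (simp add: k_def)
    then show ?thesis
      unfolding True sph_harm_nonneg[of 0, simplified] opA_harm_form pderiv_legendre_deriv_poly
      by simp
  next
    case False
    with assms have "m < 0"
      by simp
    then show ?thesis
      unfolding sph_harm_neg[OF \<open>m < 0\<close>] opA_harm_form k_def[symmetric] pderiv_legendre_deriv_poly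
      by simp
  qed
  have coeff: "raise_coeff l (- m) = sph_norm l k / sph_norm l (Suc k)"
    using assms by (simp add: raise_coeff_def k_def)
  show ?thesis
    unfolding lhs coeff sph_harm_neg[OF m1(1)] m1(2) harm_form_def
    using sph_norm_pos[of l "Suc k"] by (simp add: field_simps)
qed

lemma ang_lower_sph_harm_pos:
  fixes x :: "real^3"
  assumes "0 < m" and "norm x = 1"
  shows "ang_lower opA (\<lambda>u v. sph_harm l m u) x v
    = of_real (raise_coeff l (- m)) * sph_harm l (m - 1) x"
proof -
  define j where "j = nat m - 1"
  have j: "nat m = Suc j" "nat (m - 1) = j" "0 \<le> m - 1"
    using assms(1) by (simp_all add: j_def)
  have coeff: "raise_coeff l (- m) = sph_norm l (Suc j) * ((real l + real (Suc j)) * (real l - real (Suc j) + 1))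
      / sph_norm l j"
    using assms(1) by (simp add: raise_coeff_def j(1))
  have "ang_lower opA (\<lambda>u v. sph_harm l m u) x v
      = Complex (x$1) (- x$2) * ((-1) ^ Suc j * of_real (sph_norm l (Suc j))) * Complex (x$1) (x$2) ^ Suc j
          * of_real (poly (legendre_deriv_poly l (Suc (Suc j))) (x$3))
        - of_real (x$3) * ((-1) ^ Suc j * of_real (sph_norm l (Suc j))) * of_nat (Suc j) * 2
          * Complex (x$1) (x$2) ^ j * of_real (poly (legendre_deriv_poly l (Suc j)) (x$3))"
    unfolding sph_harm_nonneg[OF less_imp_le[OF assms(1)]] opA_harm_form j(1) pderiv_legendre_deriv_poly
    by simp
  also have "\<dots> = (-1) ^ Suc j * of_real (sph_norm l (Suc j)) * Complex (x$1) (x$2) ^ j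
      * (of_real ((x$1)\<^sup>2 + (x$2)\<^sup>2) * of_real (poly (legendre_deriv_poly l (Suc (Suc j))) (x$3))
         - 2 * of_nat (Suc j) * of_real (x$3) * of_real (poly (legendre_deriv_poly l (Suc j)) (x$3)))"
    unfolding Complex_mult_cnj[symmetric] by (simp add: algebra_simps)
  also have "\<dots> = of_real (raise_coeff l (- m)) * sph_harm l (m - 1) x"
    unfolding legendre_ladder_sphere[OF assms(2)] coeff sph_harm_nonneg[OF j(3)] j(2) harm_form_def
    using sph_norm_pos[of l j] by (simp add: field_simps)
  finally show ?thesis .
qed

lemma ang_raise_sph_harm:
  fixes x :: "real^3"
  assumes "norm x = 1"
  shows "ang_raise opA (\<lambda>u v. sph_harm l m u) x v = of_real (raise_coeff l m) * sph_harm l (m + 1) x"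
  using ang_raise_sph_harm_nonneg ang_raise_sph_harm_neg[OF _ assms] by (cases "0 \<le> m") auto

lemma ang_lower_sph_harm:
  fixes x :: "real^3"
  assumes "norm x = 1"
  shows "ang_lower opA (\<lambda>u v. sph_harm l m u) x v = of_real (raise_coeff l (- m)) * sph_harm l (m - 1) x"
  using ang_lower_sph_harm_nonpos ang_lower_sph_harm_pos[OF _ assms] by (cases "m \<le> 0") auto

section \<open>Radial reduction\<close>

lemma normalize_has_derivative:
  fixes u :: "'a::real_inner"
  assumes "u \<noteq> 0"
  shows "((\<lambda>x. x /\<^sub>R norm x) has_derivative
     (\<lambda>h. inverse (norm u) *\<^sub>R h - (inverse (norm u) * inverse (norm u) * (h \<bullet> sgn u)) *\<^sub>R u)) (at u)"
proof -
  have "((\<lambda>x. inverse (norm x) *\<^sub>R x) has_derivative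
     (\<lambda>h. inverse (norm u) *\<^sub>R h + (- (inverse (norm u) * (h \<bullet> sgn u) * inverse (norm u))) *\<^sub>R u)) (at u)"
    by (rule derivative_eq_intros has_derivative_norm[OF assms] refl | use assms in simp)+
  then show ?thesis
    by (simp add: algebra_simps)
qed

text \<open>The radial factor drops out because \<open>\<partial>\<^sub>j |u| = u\<^sub>j / |u|\<close>, and the angular factor only
  sees the component of the gradient tangent to the sphere.\<close>
lemma opA_radial_angular:
  assumes u: "u \<noteq> 0"
    and f: "\<And>x. f x v = of_real (\<rho> (norm x)) * Y (x /\<^sub>R norm x) * c"
    and Y: "(Y has_derivative Y') (at (u /\<^sub>R norm u))"
    and \<rho>: "(\<rho> has_real_derivative \<rho>') (at (norm u))"
  shows "opA i j f u v = of_real (\<rho> (norm u)) * opA i j (\<lambda>x w. Y x) (u /\<^sub>R norm u) v * c"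
proof -
  define N' where "N' = (\<lambda>h. inverse (norm u) *\<^sub>R h - (inverse (norm u) * inverse (norm u) * (h \<bullet> sgn u)) *\<^sub>R u)"
  have YN: "((\<lambda>x. Y (x /\<^sub>R norm x)) has_derivative (\<lambda>h. Y' (N' h))) (at u)"
    using has_derivative_compose[OF normalize_has_derivative[OF u] Y] by (simp add: N'_def)
  have \<rho>N: "((\<lambda>x. \<rho> (norm x)) has_derivative (\<lambda>h. (h \<bullet> sgn u) * \<rho>')) (at u)"
    by (rule DERIV_compose_FDERIV[OF \<rho> has_derivative_norm[OF u]])
  define F' where "F' = (\<lambda>h. of_real ((h \<bullet> sgn u) * \<rho>') * Y (u /\<^sub>R norm u) * c
       + of_real (\<rho> (norm u)) * Y' (N' h) * c)"
  have "((\<lambda>x. f x v) has_derivative F') (at u)"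
    unfolding f F'_def by (rule derivative_eq_intros \<rho>N YN refl)+ (simp add: algebra_simps)
  then have pdu_f: "pdu k f u v = F' (axis k 1)" for k
    by (rule pdu_eq_derivative)
  have pdu_Y: "pdu k (\<lambda>x w. Y x) (u /\<^sub>R norm u) v = Y' (axis k 1)" for k
    by (rule pdu_eq_derivative) (use Y in simp)
  have lin: "linear Y'"
    using has_derivative_linear[OF Y] .
  have sgn_axis: "axis k 1 \<bullet> sgn u = u$k / norm u" for k
    by (simp add: inner_axis' sgn_div_norm divide_inverse mult.commute)
  have Y'N': "Y' (N' (axis k 1)) = of_real (inverse (norm u)) * Y' (axis k 1)
       - of_real (inverse (norm u) * inverse (norm u) * (u$k / norm u)) * Y' u" for k
    unfolding N'_def sgn_axis
    by (simp add: linear_diff[OF lin] linear_scale[OF lin]) (simp add: scaleR_conv_of_real divide_inverse mult.commute)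
  show ?thesis
    unfolding opA_def pdu_f pdu_Y F'_def Y'N' sgn_axis using u by (simp add: field_simps)
qed

lemma sph_bessel_j_has_derivative: "\<exists>D. (sph_bessel_j l has_real_derivative D) (at x)"
proof -
  have "((\<lambda>x. x ^ l * bessel_g l (x\<^sup>2)) has_real_derivative
     of_nat l * x ^ (l - 1) * bessel_g l (x\<^sup>2) + x ^ l * (- bessel_g (Suc l) (x\<^sup>2) / 2 * (2 * x))) (at x)"
    by (rule derivative_eq_intros DERIV_chain2[OF bessel_g_has_real_derivative] refl)+ simp
  then show ?thesis
    unfolding sph_bessel_j_eq_bessel_g[abs_def] by blast
qed

lemma Psi_opA:
  assumes "u \<noteq> 0"
  shows "opA i j (Psi l m n) u v = of_real (sph_bessel_j l (norm u * norm v))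
      * opA i j (\<lambda>u v. sph_harm l m u) (u /\<^sub>R norm u) v * sph_harm l n (v /\<^sub>R norm v)"
proof -
  obtain Y' where "(sph_harm l m has_derivative Y') (at (u /\<^sub>R norm u))"
    using sph_harm_has_derivative by blast
  moreover obtain D where "(sph_bessel_j l has_real_derivative D) (at (norm u * norm v))"
    using sph_bessel_j_has_derivative by blast
  then have "((\<lambda>r. sph_bessel_j l (r * norm v)) has_real_derivative D * norm v) (at (norm u))"
    by (rule DERIV_chain2[OF _ DERIV_cmult_right[OF DERIV_ident], simplified])
  ultimately show ?thesis
    by (intro opA_radial_angular[OF assms]) (simp_all add: Psi_def)
qed

lemma Psi_eq_0: "l < nat \<bar>m\<bar> \<Longrightarrow> Psi l m n = (\<lambda>u v. 0)"
  by (simp add: Psi_def sph_harm_eq_0)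

lemma Psi_angular_eigen:
  assumes radial: "\<And>u v. u \<noteq> 0 \<Longrightarrow> A (Psi l m n) u v = of_real (sph_bessel_j l (norm u * norm v))
      * A (\<lambda>u v. sph_harm l m u) (u /\<^sub>R norm u) v * sph_harm l n (v /\<^sub>R norm v)"
    and origin: "\<And>v. A (Psi l m n) 0 v = 0"
    and harm: "\<And>x v. norm x = 1 \<Longrightarrow> A (\<lambda>u v. sph_harm l m u) x v = c * sph_harm l m' x"
    and origin': "\<And>v. c * Psi l m' n 0 v = 0"
  shows "A (Psi l m n) = (\<lambda>u v. c * Psi l m' n u v)"
proof (intro ext)
  fix u v :: "real^3"
  show "A (Psi l m n) u v = c * Psi l m' n u v"
  proof (cases "u = 0")
    case False
    then show ?thesis
      unfolding radial[OF False] by (simp add: harm Psi_def)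
  qed (simp add: origin origin')
qed

lemma Psi_origin:
  assumes "l \<noteq> 0 \<or> m \<noteq> 0"
  shows "Psi l m n 0 v = 0"
proof (cases "l = 0")
  case True
  with assms have "l < nat \<bar>m\<bar>"
    by simp
  then show ?thesis
    by (simp add: Psi_eq_0)
qed (simp add: Psi_def sph_bessel_j_eq_bessel_g)

lemma opA_Psi:
  assumes "\<bar>m\<bar> \<le> int l"
  shows "opA 1 2 (Psi l m n) = (\<lambda>u v. of_int m * Psi l m n u v)"
proof (rule Psi_angular_eigen)
  show "of_int m * Psi l m n 0 v = 0" for v
    using Psi_origin[of l m] by (cases "m = 0") auto
qed (simp_all add: Psi_opA opA_at_origin opA_sph_harm)

lemma ang_raise_opA_Psi:
  assumes "\<bar>m\<bar> \<le> int l"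
  shows "ang_raise opA (Psi l m n) = (\<lambda>u v. of_real (raise_coeff l m) * Psi l (m + 1) n u v)"
proof (rule Psi_angular_eigen)
  show "ang_raise opA (Psi l m n) u v = of_real (sph_bessel_j l (norm u * norm v))
      * ang_raise opA (\<lambda>u v. sph_harm l m u) (u /\<^sub>R norm u) v * sph_harm l n (v /\<^sub>R norm v)"
    if "u \<noteq> 0" for u v
    using that by (simp add: ang_raise_def Psi_opA algebra_simps)
  show "of_real (raise_coeff l m) * Psi l (m + 1) n 0 v = 0" for v
  proof -
    have "l \<noteq> 0 \<or> m + 1 \<noteq> 0"
      using assms by auto
    then show ?thesis
      by (simp add: Psi_origin)
  qed
qed (simp_all add: ang_raise_opA_origin ang_raise_sph_harm)

lemma ang_lower_opA_Psi:
  assumes "\<bar>m\<bar> \<le> int l"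
  shows "ang_lower opA (Psi l m n) = (\<lambda>u v. of_real (raise_coeff l (- m)) * Psi l (m - 1) n u v)"
proof (rule Psi_angular_eigen)
  show "ang_lower opA (Psi l m n) u v = of_real (sph_bessel_j l (norm u * norm v))
      * ang_lower opA (\<lambda>u v. sph_harm l m u) (u /\<^sub>R norm u) v * sph_harm l n (v /\<^sub>R norm v)"
    if "u \<noteq> 0" for u v
    using that by (simp add: ang_lower_def Psi_opA algebra_simps)
  show "of_real (raise_coeff l (- m)) * Psi l (m - 1) n 0 v = 0" for v
  proof -
    have "l \<noteq> 0 \<or> m - 1 \<noteq> 0"
      using assms by auto
    then show ?thesis
      by (simp add: Psi_origin)
  qed
qed (simp_all add: ang_lower_opA_origin ang_lower_sph_harm)

lemma swap_args_Psi: "swap_args (Psi l m n) = Psi l n m"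
  unfolding swap_args_def Psi_def by (auto simp: fun_eq_iff mult.commute mult.left_commute)

lemma Psi_swap: "Psi l m n v u = Psi l n m u v"
  using swap_args_Psi[of l m n] unfolding swap_args_def by metis

lemma opB_Psi:
  assumes "\<bar>n\<bar> \<le> int l"
  shows "opB 1 2 (Psi l m n) = (\<lambda>u v. of_int n * Psi l m n u v)"
  using opA_Psi[OF assms, of m] by (simp add: fun_eq_iff opB_eq_opA_swap_args swap_args_Psi Psi_swap)

lemma ang_raise_opB_Psi:
  assumes "\<bar>n\<bar> \<le> int l"
  shows "ang_raise opB (Psi l m n) = (\<lambda>u v. of_real (raise_coeff l n) * Psi l m (n + 1) u v)"
  using ang_raise_opA_Psi[OF assms, of m]
  by (simp add: fun_eq_iff ang_raise_opB_eq_opA swap_args_Psi Psi_swap)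

lemma ang_lower_opB_Psi:
  assumes "\<bar>n\<bar> \<le> int l"
  shows "ang_lower opB (Psi l m n) = (\<lambda>u v. of_real (raise_coeff l (- n)) * Psi l m (n - 1) u v)"
  using ang_lower_opA_Psi[OF assms, of m]
  by (simp add: fun_eq_iff ang_lower_opB_eq_opA swap_args_Psi Psi_swap)

lemma Psi_differentiable:
  assumes "u \<noteq> 0"
  shows "(\<lambda>x. Psi l m n x v) differentiable (at u)"
proof -
  obtain Y' where "(sph_harm l m has_derivative Y') (at (u /\<^sub>R norm u))"
    using sph_harm_has_derivative by blast
  note Y = has_derivative_compose[OF normalize_has_derivative[OF assms] this]
  obtain D where "(sph_bessel_j l has_real_derivative D) (at (norm u * norm v))"
    using sph_bessel_j_has_derivative by blast
  note j = DERIV_compose_FDERIV[OF this has_derivative_mult_left[OF has_derivative_norm[OF assms]]]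
  show ?thesis
    unfolding Psi_def differentiable_def by (rule exI) (rule derivative_eq_intros Y j refl)+
qed

section \<open>The operators \<open>C\<close> and the top states\<close>

lemma pdv_radial_product:
  assumes g: "\<And>s. (g has_real_derivative g1 s) (at s)" and B: "\<And>x. (B has_derivative DB x) (at x)"
  shows "pdv j (\<lambda>u v. of_real (g ((norm u)\<^sup>2 * (norm v)\<^sup>2)) * A u * B v)
    = (\<lambda>u v. of_real (g1 ((norm u)\<^sup>2 * (norm v)\<^sup>2) * ((norm u)\<^sup>2 * (2 * v$j))) * A u * B v
      + of_real (g ((norm u)\<^sup>2 * (norm v)\<^sup>2)) * A u * DB v (axis j 1))"
proof (intro ext)
  fix u v :: "real^3"
  have "((\<lambda>y. (norm u)\<^sup>2 * (norm y)\<^sup>2) has_derivative (\<lambda>h. (norm u)\<^sup>2 * (2 * (v \<bullet> h)))) (at v)"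
    using has_derivative_sqnorm_at[of v] by (intro has_derivative_mult_right) simp
  note gv = DERIV_compose_FDERIV[OF g this]
  have "((\<lambda>y. of_real (g ((norm u)\<^sup>2 * (norm y)\<^sup>2)) * A u * B y) has_derivative
     (\<lambda>h. of_real ((norm u)\<^sup>2 * (2 * (v \<bullet> h)) * g1 ((norm u)\<^sup>2 * (norm v)\<^sup>2)) * A u * B v
         + of_real (g ((norm u)\<^sup>2 * (norm v)\<^sup>2)) * A u * DB v h)) (at v)"
    by (rule derivative_eq_intros gv B refl)+ (simp add: algebra_simps)
  from pdv_eq_derivative[where f = "\<lambda>u v. of_real (g ((norm u)\<^sup>2 * (norm v)\<^sup>2)) * A u * B v", OF this]
  show "pdv j (\<lambda>u v. of_real (g ((norm u)\<^sup>2 * (norm v)\<^sup>2)) * A u * B v) u v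
    = of_real (g1 ((norm u)\<^sup>2 * (norm v)\<^sup>2) * ((norm u)\<^sup>2 * (2 * v$j))) * A u * B v
      + of_real (g ((norm u)\<^sup>2 * (norm v)\<^sup>2)) * A u * DB v (axis j 1)"
    by (simp add: inner_axis algebra_simps)
qed

lemma opC_radial_product:
  fixes u v :: "real^3"
  assumes g: "\<And>s. (g has_real_derivative g1 s) (at s)" and g1: "\<And>s. (g1 has_real_derivative g2 s) (at s)"
    and A: "\<And>x. (A has_derivative DA x) (at x)" and B: "\<And>x. (B has_derivative DB x) (at x)"
  defines "r \<equiv> (norm u)\<^sup>2 * (norm v)\<^sup>2"
  shows "opC i j (\<lambda>u v. of_real (g ((norm u)\<^sup>2 * (norm v)\<^sup>2)) * A u * B v) u v =
     of_real (u$i * v$j) * (of_real (g r) * A u * B v)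
   + of_real (g2 r * (2 * u$i * (norm v)\<^sup>2) * ((norm u)\<^sup>2 * (2 * v$j)) + g1 r * (2 * u$i) * (2 * v$j)) * A u * B v
   + of_real (g1 r * ((norm u)\<^sup>2 * (2 * v$j))) * DA u (axis i 1) * B v
   + of_real (g1 r * (2 * u$i * (norm v)\<^sup>2)) * A u * DB v (axis j 1)
   + of_real (g r) * DA u (axis i 1) * DB v (axis j 1)"
proof -
  have sq: "((\<lambda>x. (norm x)\<^sup>2 * (norm v)\<^sup>2) has_derivative (\<lambda>h. 2 * (u \<bullet> h) * (norm v)\<^sup>2)) (at u)"
    using has_derivative_sqnorm_at[of u] by (intro has_derivative_mult_left) simp
  note g1u = DERIV_compose_FDERIV[OF g1 sq] and gu = DERIV_compose_FDERIV[OF g sq]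
  define E where "E = (\<lambda>u v. of_real (g1 ((norm u)\<^sup>2 * (norm v)\<^sup>2) * ((norm u)\<^sup>2 * (2 * v$j))) * A u * B v
      + of_real (g ((norm u)\<^sup>2 * (norm v)\<^sup>2)) * A u * DB v (axis j 1))"
  have "((\<lambda>x. E x v) has_derivative
     (\<lambda>h. of_real (2 * (u \<bullet> h) * (norm v)\<^sup>2 * g2 r * ((norm u)\<^sup>2 * (2 * v$j))
              + g1 r * (2 * (u \<bullet> h) * (2 * v$j))) * A u * B v
        + of_real (g1 r * ((norm u)\<^sup>2 * (2 * v$j))) * DA u h * B v
        + of_real (2 * (u \<bullet> h) * (norm v)\<^sup>2 * g1 r) * A u * DB v (axis j 1)
        + of_real (g r) * DA u h * DB v (axis j 1))) (at u)"
    unfolding E_def r_def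
    by (rule derivative_eq_intros g1u gu A has_derivative_sqnorm_at refl)+ (simp add: algebra_simps)
  from pdu_eq_derivative[where f = E, OF this, of i] show ?thesis
    unfolding opC_def pdv_radial_product[OF g B] E_def[symmetric] r_def by (simp add: inner_axis algebra_simps)
qed

definition top_state :: "nat \<Rightarrow> phasefun" where
  "top_state l = (\<lambda>u v. of_real (bessel_g l ((norm u)\<^sup>2 * (norm v)\<^sup>2))
      * Complex (u$1) (u$2) ^ l * Complex (v$1) (v$2) ^ l)"

text \<open>\<open>C\<^sub>\<plusminus> = (u\<^sub>1 \<plusminus> i u\<^sub>2)(v\<^sub>1 \<plusminus> i v\<^sub>2) + (\<partial>\<^sub>u\<^sub>1 \<plusminus> i \<partial>\<^sub>u\<^sub>2)(\<partial>\<^sub>v\<^sub>1 \<plusminus> i \<partial>\<^sub>v\<^sub>2)\<close>.\<close>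
definition C_raise :: "phasefun \<Rightarrow> phasefun" where
  "C_raise f = (\<lambda>u v. opC 1 1 f u v + \<i> * opC 1 2 f u v + \<i> * opC 2 1 f u v - opC 2 2 f u v)"

definition C_lower :: "phasefun \<Rightarrow> phasefun" where
  "C_lower f = (\<lambda>u v. opC 1 1 f u v - \<i> * opC 1 2 f u v - \<i> * opC 2 1 f u v - opC 2 2 f u v)"

lemma has_derivative_Complex_power:
  "((\<lambda>x::real^3. Complex (x$1) (x$2) ^ l) has_derivative
      (\<lambda>h. of_nat l * Complex (h$1) (h$2) * Complex (x$1) (x$2) ^ (l - 1))) (at x)"
  using has_derivative_power[OF has_derivative_Complex_vec_nth[of 1], where n = l and x = x and S = UNIV]
  by simp

lemma opC_top_state:
  fixes u v :: "real^3"
  defines "r \<equiv> (norm u)\<^sup>2 * (norm v)\<^sup>2" and "w \<equiv> Complex (u$1) (u$2)" and "z \<equiv> Complex (v$1) (v$2)"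
  shows "opC i j (top_state l) u v =
     of_real (u$i * v$j) * (of_real (bessel_g l r) * w ^ l * z ^ l)
   + of_real (bessel_g (Suc (Suc l)) r / 4 * (2 * u$i * (norm v)\<^sup>2) * ((norm u)\<^sup>2 * (2 * v$j))
        + (- bessel_g (Suc l) r / 2) * (2 * u$i) * (2 * v$j)) * w ^ l * z ^ l
   + of_real (- bessel_g (Suc l) r / 2 * ((norm u)\<^sup>2 * (2 * v$j)))
       * (of_nat l * Complex (axis i 1 $ 1) (axis i 1 $ 2) * w ^ (l - 1)) * z ^ l
   + of_real (- bessel_g (Suc l) r / 2 * (2 * u$i * (norm v)\<^sup>2))
       * w ^ l * (of_nat l * Complex (axis j 1 $ 1) (axis j 1 $ 2) * z ^ (l - 1))
   + of_real (bessel_g l r) * (of_nat l * Complex (axis i 1 $ 1) (axis i 1 $ 2) * w ^ (l - 1))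
       * (of_nat l * Complex (axis j 1 $ 1) (axis j 1 $ 2) * z ^ (l - 1))"
proof -
  have g': "((\<lambda>s. - bessel_g (Suc l) s / 2) has_real_derivative bessel_g (Suc (Suc l)) s / 4) (at s)" for s
    using DERIV_cdivide[OF bessel_g_has_real_derivative[of "Suc l" s], of "- 2"] by simp
  show ?thesis
    unfolding top_state_def r_def w_def z_def
    by (rule opC_radial_product[OF bessel_g_has_real_derivative g'
          has_derivative_Complex_power has_derivative_Complex_power])
qed

lemma C_raise_top_state: "C_raise (top_state l) = (\<lambda>u v. of_nat (2 * l + 1) * top_state (Suc l) u v)"
proof (intro ext)
  fix u v :: "real^3"
  define a b where "a = (norm u)\<^sup>2" and "b = (norm v)\<^sup>2"
  have rec: "bessel_g l (a * b) = real (2 * l + 3) * bessel_g (Suc l) (a * b) - (a * b) * bessel_g (Suc (Suc l)) (a * b)"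
    by (rule bessel_g_recurrence)
  show "C_raise (top_state l) u v = of_nat (2 * l + 1) * top_state (Suc l) u v"
  proof (cases l)
    case 0
    show ?thesis
      unfolding C_raise_def opC_top_state unfolding top_state_def a_def[symmetric] b_def[symmetric] 0
      by (simp add: axis_def Complex_eq algebra_simps rec[unfolded 0])
  next
    case (Suc k)
    show ?thesis
      unfolding C_raise_def opC_top_state unfolding top_state_def a_def[symmetric] b_def[symmetric] Suc
      by (simp add: axis_def Complex_eq algebra_simps rec[unfolded Suc])
  qed
qed

definition near_top_state :: "nat \<Rightarrow> phasefun" where
  "near_top_state k = (\<lambda>u v. of_real (bessel_g (Suc (Suc k)) ((norm u)\<^sup>2 * (norm v)\<^sup>2))
      * Complex (u$1) (u$2) ^ k * of_real ((norm u)\<^sup>2 - real (2 * k + 3) * (u$3)\<^sup>2)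
      * Complex (v$1) (v$2) ^ k * of_real ((norm v)\<^sup>2 - real (2 * k + 3) * (v$3)\<^sup>2))"

lemma norm_vec3_sq: "(norm (x::real^3))\<^sup>2 = (x$1)\<^sup>2 + (x$2)\<^sup>2 + (x$3)\<^sup>2"
  by (simp add: norm_eq_sqrt_inner inner_vec_def sum_3 power2_eq_square)

text \<open>The lowering operator does not stay within top states: it produces the
  \<open>(m, n) = (l - 2, l - 2)\<close> state of degree \<open>l = k + 2\<close> as well.\<close>
lemma C_lower_top_state:
  fixes u v :: "real^3"
  shows "of_nat (2 * k + 3) * C_lower (top_state (Suc k)) u v
    = of_nat (4 * (Suc k)\<^sup>2) * top_state k u v + near_top_state k u v"
proof -
  define a b where "a = (norm u)\<^sup>2" and "b = (norm v)\<^sup>2"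
  have u3: "(u$3)\<^sup>2 = a - (u$1)\<^sup>2 - (u$2)\<^sup>2" and v3: "(v$3)\<^sup>2 = b - (v$1)\<^sup>2 - (v$2)\<^sup>2"
    by (simp_all add: a_def b_def norm_vec3_sq)
  have r1: "bessel_g (Suc k) (a * b)
      = real (2 * k + 5) * bessel_g (Suc (Suc k)) (a * b) - (a * b) * bessel_g (Suc (Suc (Suc k))) (a * b)"
    using bessel_g_recurrence[of "Suc k" "a * b"] by simp
  have r0: "bessel_g k (a * b)
      = real (2 * k + 3) * bessel_g (Suc k) (a * b) - (a * b) * bessel_g (Suc (Suc k)) (a * b)"
    by (rule bessel_g_recurrence)
  show ?thesis
    unfolding C_lower_def opC_top_state unfolding top_state_def near_top_state_def a_def[symmetric]
      b_def[symmetric] u3 v3 r0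
    unfolding r1 by (simp add: axis_def Complex_eq algebra_simps power2_eq_square)
qed

lemma Psi_eq_solid_harmonics:
  assumes "u \<noteq> 0" "v \<noteq> 0"
  shows "Psi l m n u v = of_real (bessel_g l ((norm u)\<^sup>2 * (norm v)\<^sup>2))
     * (of_real (norm u ^ l) * sph_harm l m (u /\<^sub>R norm u)) * (of_real (norm v ^ l) * sph_harm l n (v /\<^sub>R norm v))"
  unfolding Psi_def sph_bessel_j_eq_bessel_g by (simp add: power_mult_distrib)

lemma Complex_normalize: "Complex ((x /\<^sub>R norm x)$1) ((x /\<^sub>R norm x)$2) = Complex (x$1) (x$2) / of_real (norm x)"
  by (cases "x = 0") (simp_all add: complex_eq_iff field_simps)

lemma sph_harm_top: "sph_harm l (int l) x = of_real ((-1) ^ l * sph_norm l l * legendre_top l) * Complex (x$1) (x$2) ^ l"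
  unfolding sph_harm_def by (simp add: poly_legendre_deriv_poly_top)

lemma solid_sph_harm_top:
  fixes x :: "real^3"
  assumes "x \<noteq> 0"
  shows "of_real (norm x ^ l) * sph_harm l (int l) (x /\<^sub>R norm x)
    = of_real ((-1) ^ l * sph_norm l l * legendre_top l) * Complex (x$1) (x$2) ^ l"
  using assms unfolding sph_harm_top Complex_normalize by (simp add: power_divide)

lemma Psi_top: "Psi l (int l) (int l) = (\<lambda>u v. of_real ((sph_norm l l * legendre_top l)\<^sup>2) * top_state l u v)"
proof (intro ext)
  fix u v :: "real^3"
  show "Psi l (int l) (int l) u v = of_real ((sph_norm l l * legendre_top l)\<^sup>2) * top_state l u v"
  proof (cases "u = 0 \<or> v = 0")
    case True
    show ?thesis
    proof (cases l)
      case 0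
      then show ?thesis
        using True sph_harm_top[of 0]
        by (auto simp: Psi_def top_state_def sph_bessel_j_eq_bessel_g power2_eq_square)
    next
      case (Suc k)
      have "Complex 0 0 = 0"
        by (simp add: complex_eq_iff)
      with True Suc show ?thesis
        by (auto simp: Psi_def top_state_def sph_harm_top sph_bessel_j_eq_bessel_g)
    qed
  next
    case False
    then have "u \<noteq> 0" "v \<noteq> 0"
      by auto
    then show ?thesis
      unfolding Psi_eq_solid_harmonics[OF \<open>u \<noteq> 0\<close> \<open>v \<noteq> 0\<close>] solid_sph_harm_top[OF \<open>u \<noteq> 0\<close>]
        solid_sph_harm_top[OF \<open>v \<noteq> 0\<close>] top_state_def
      by (simp add: power_mult_distrib power2_eq_square algebra_simps flip: power_add)
  qed
qed

definition near_top_coeff :: "nat \<Rightarrow> real" where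
  "near_top_coeff k = sph_norm (Suc (Suc k)) k * (legendre_top (Suc (Suc k)) / (2 * real (2 * k + 3)))"

lemma near_top_coeff_pos: "near_top_coeff k > 0"
  using sph_norm_pos legendre_top_pos by (simp add: near_top_coeff_def)

lemma sph_harm_near_top:
  "sph_harm (Suc (Suc k)) (int k) x
    = of_real ((-1) ^ k * near_top_coeff k) * Complex (x$1) (x$2) ^ k * of_real (real (2 * k + 3) * (x$3)\<^sup>2 - 1)"
  unfolding sph_harm_def near_top_coeff_def by (simp add: poly_legendre_deriv_poly_pred2)

lemma solid_sph_harm_near_top:
  fixes x :: "real^3"
  assumes "x \<noteq> 0"
  shows "of_real (norm x ^ Suc (Suc k)) * sph_harm (Suc (Suc k)) (int k) (x /\<^sub>R norm x)
    = - of_real ((-1) ^ k * near_top_coeff k) * Complex (x$1) (x$2) ^ k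
      * of_real ((norm x)\<^sup>2 - real (2 * k + 3) * (x$3)\<^sup>2)"
proof -
  have nx: "norm x \<noteq> 0"
    using assms by simp
  have "of_real (norm x ^ Suc (Suc k)) * sph_harm (Suc (Suc k)) (int k) (x /\<^sub>R norm x)
      = of_real ((-1) ^ k * near_top_coeff k) * Complex (x$1) (x$2) ^ k
        * of_real (norm x ^ Suc (Suc k) / norm x ^ k * (real (2 * k + 3) * (x$3 / norm x)\<^sup>2 - 1))"
    unfolding sph_harm_near_top Complex_normalize using nx by (simp add: power_divide field_simps)
  also have "norm x ^ Suc (Suc k) / norm x ^ k * (real (2 * k + 3) * (x$3 / norm x)\<^sup>2 - 1)
      = - ((norm x)\<^sup>2 - real (2 * k + 3) * (x$3)\<^sup>2)"
    using nx by (simp add: field_simps power2_eq_square)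
  finally show ?thesis
    by (simp add: algebra_simps)
qed

lemma Psi_near_top:
  "Psi (Suc (Suc k)) (int k) (int k) = (\<lambda>u v. of_real ((near_top_coeff k)\<^sup>2) * near_top_state k u v)"
proof (intro ext)
  fix u v :: "real^3"
  show "Psi (Suc (Suc k)) (int k) (int k) u v = of_real ((near_top_coeff k)\<^sup>2) * near_top_state k u v"
  proof (cases "u = 0 \<or> v = 0")
    case True
    have "Complex 0 0 = 0"
      by (simp add: complex_eq_iff)
    with True show ?thesis
      by (cases k) (auto simp: Psi_def near_top_state_def sph_bessel_j_eq_bessel_g)
  next
    case False
    then have "u \<noteq> 0" "v \<noteq> 0"
      by auto
    then show ?thesis
      unfolding Psi_eq_solid_harmonics[OF \<open>u \<noteq> 0\<close> \<open>v \<noteq> 0\<close>]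
        solid_sph_harm_near_top[OF \<open>u \<noteq> 0\<close>] solid_sph_harm_near_top[OF \<open>v \<noteq> 0\<close>] near_top_state_def
      by (simp add: power_mult_distrib power2_eq_square algebra_simps flip: power_add)
  qed
qed

section \<open>Finite linear combinations\<close>

definition lincomb :: "'i set \<Rightarrow> ('i \<Rightarrow> phasefun) \<Rightarrow> ('i \<Rightarrow> complex) \<Rightarrow> phasefun" where
  "lincomb T b d = (\<lambda>u v. \<Sum>s\<in>T. d s * b s u v)"

lemma lincomb_cong:
  assumes "\<And>s. s \<in> T \<Longrightarrow> b s = (\<lambda>u v. e s * b' s u v)"
  shows "lincomb T b d = lincomb T b' (\<lambda>s. d s * e s)"
  unfolding lincomb_def using assms by (intro ext sum.cong) (simp_all add: mult.assoc)

lemma swap_args_lincomb: "swap_args (lincomb T b d) = lincomb T (\<lambda>s. swap_args (b s)) d"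
  by (simp add: swap_args_def lincomb_def)

lemma opA_lincomb:
  assumes T: "finite T" and diff: "\<And>s u v. s \<in> T \<Longrightarrow> u \<noteq> 0 \<Longrightarrow> (\<lambda>x. b s x v) differentiable (at u)"
  shows "opA i j (lincomb T b d) = lincomb T (\<lambda>s. opA i j (b s)) d"
proof (intro ext)
  fix u v :: "real^3"
  show "opA i j (lincomb T b d) u v = lincomb T (\<lambda>s. opA i j (b s)) d u v"
  proof (cases "u = 0")
    case True
    then show ?thesis
      by (simp add: lincomb_def opA_at_origin)
  next
    case False
    have "\<forall>s\<in>T. \<exists>D. ((\<lambda>x. b s x v) has_derivative D) (at u)"
      using diff[OF _ False] unfolding differentiable_def by blast
    from bchoice[OF this] obtain D where D: "\<And>s. s \<in> T \<Longrightarrow> ((\<lambda>x. b s x v) has_derivative D s) (at u)"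
      by blast
    have "((\<lambda>x. lincomb T b d x v) has_derivative (\<lambda>h. \<Sum>s\<in>T. d s * D s h)) (at u)"
      unfolding lincomb_def by (intro has_derivative_sum has_derivative_mult_right D)
    then have "pdu k (lincomb T b d) u v = (\<Sum>s\<in>T. d s * D s (axis k 1))" for k
      by (rule pdu_eq_derivative)
    moreover have "pdu k (b s) u v = D s (axis k 1)" if "s \<in> T" for s k
      using D[OF that] by (rule pdu_eq_derivative)
    ultimately show ?thesis
      unfolding opA_def lincomb_def
      by (simp add: sum_distrib_left sum_subtractf[symmetric] algebra_simps cong: sum.cong)
  qed
qed

lemma opB_lincomb:
  assumes T: "finite T" and diff: "\<And>s u v. s \<in> T \<Longrightarrow> v \<noteq> 0 \<Longrightarrow> (\<lambda>y. b s u y) differentiable (at v)"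
  shows "opB i j (lincomb T b d) = lincomb T (\<lambda>s. opB i j (b s)) d"
proof -
  have "opA i j (lincomb T (\<lambda>s. swap_args (b s)) d) = lincomb T (\<lambda>s. opA i j (swap_args (b s))) d"
    using T diff by (intro opA_lincomb) (simp_all add: swap_args_def)
  then show ?thesis
    by (simp add: fun_eq_iff opB_eq_opA_swap_args swap_args_lincomb) (simp add: lincomb_def opB_eq_opA_swap_args)
qed

lemma ang_raise_opA_lincomb:
  assumes "finite T" and "\<And>s u v. s \<in> T \<Longrightarrow> u \<noteq> 0 \<Longrightarrow> (\<lambda>x. b s x v) differentiable (at u)"
  shows "ang_raise opA (lincomb T b d) = lincomb T (\<lambda>s. ang_raise opA (b s)) d"
  using opA_lincomb[OF assms]
  by (simp add: ang_raise_def lincomb_def fun_eq_iff sum.distrib sum_distrib_left algebra_simps)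

lemma ang_lower_opA_lincomb:
  assumes "finite T" and "\<And>s u v. s \<in> T \<Longrightarrow> u \<noteq> 0 \<Longrightarrow> (\<lambda>x. b s x v) differentiable (at u)"
  shows "ang_lower opA (lincomb T b d) = lincomb T (\<lambda>s. ang_lower opA (b s)) d"
  using opA_lincomb[OF assms]
  by (simp add: ang_lower_def lincomb_def fun_eq_iff sum_subtractf sum_distrib_left algebra_simps)

lemma lincomb_singleton: "lincomb {s} b d = (\<lambda>u v. d s * b s u v)"
  by (simp add: lincomb_def)

lemma lincomb_nonzero_coeff: "lincomb S b d \<noteq> (\<lambda>u v. 0) \<Longrightarrow> \<exists>s\<in>S. d s \<noteq> 0"
  by (auto simp: lincomb_def)

definition psi :: "nat \<times> int \<times> int \<Rightarrow> phasefun" where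
  "psi = (\<lambda>(l, m, n). Psi l m n)"

lemma mem_V_phys_iff: "f \<in> V_phys \<longleftrightarrow> (\<exists>S c. finite S \<and> S \<subseteq> Psi_index \<and> f = lincomb S psi c)"
proof -
  have "(\<lambda>u v. \<Sum>(l, m, n)\<in>S. c (l, m, n) * Psi l m n u v) = lincomb S psi c" for S c
    unfolding lincomb_def psi_def by (intro ext sum.cong) auto
  then show ?thesis
    unfolding V_phys_def by simp
qed

lemma psi_differentiable_u: "u \<noteq> 0 \<Longrightarrow> (\<lambda>x. psi s x v) differentiable (at u)"
  by (auto simp: psi_def Psi_differentiable split: prod.split)

lemma psi_differentiable_v:
  assumes "v \<noteq> 0"
  shows "(\<lambda>y. psi s u y) differentiable (at v)"
proof -
  obtain l m n where s: "s = (l, m, n)"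
    by (cases s) auto
  have "(\<lambda>y. Psi l n m y u) differentiable (at v)"
    using assms by (rule Psi_differentiable)
  then show ?thesis
    by (simp add: psi_def s Psi_swap[of l m n u])
qed

lemma opA_lincomb_psi:
  assumes "finite T" "T \<subseteq> Psi_index"
  shows "opA 1 2 (lincomb T psi d) = lincomb T psi (\<lambda>s. d s * (case s of (l, m, n) \<Rightarrow> of_int m))"
  using assms
  by (simp add: opA_lincomb psi_differentiable_u)
    (rule lincomb_cong, auto simp: psi_def Psi_index_def opA_Psi)

lemma opB_lincomb_psi:
  assumes "finite T" "T \<subseteq> Psi_index"
  shows "opB 1 2 (lincomb T psi d) = lincomb T psi (\<lambda>s. d s * (case s of (l, m, n) \<Rightarrow> of_int n))"
  using assms
  by (simp add: opB_lincomb psi_differentiable_v)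
    (rule lincomb_cong, auto simp: psi_def Psi_index_def opB_Psi)

text \<open>The eigenvalue \<open>l(l + 1) - m\<^sup>2 + m\<close> of \<open>L\<^sub>+L\<^sub>- = L\<^sup>2 - L\<^sub>3\<^sup>2 + L\<^sub>3\<close> on \<open>Y\<^sub>l\<^sub>m\<close>.\<close>
definition lower_raise_eigenvalue :: "nat \<Rightarrow> int \<Rightarrow> real" where
  "lower_raise_eigenvalue l m = (real l + of_int m) * (real l - of_int m + 1)"

lemma lower_raise_eigenvalue_inj: "lower_raise_eigenvalue l' m = lower_raise_eigenvalue l m \<Longrightarrow> l' = l"
proof -
  assume "lower_raise_eigenvalue l' m = lower_raise_eigenvalue l m"
  then have "(real l' - real l) * (real l' + real l + 1) = 0"
    by (simp add: lower_raise_eigenvalue_def algebra_simps)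
  then show "l' = l"
    by (simp add: add_nonneg_pos)
qed

lemma raise_coeff_mult_raise_coeff_uminus:
  assumes "\<bar>m\<bar> \<le> int l" "- int l < m"
  shows "raise_coeff l (m - 1) * raise_coeff l (- m) = lower_raise_eigenvalue l m"
proof (cases "0 < m")
  case True
  have a: "raise_coeff l (- m) = sph_norm l (nat m) * (real l + real (nat m)) * (real l - real (nat m) + 1)
      / sph_norm l (nat m - 1)"
    unfolding raise_coeff_def using True by simp
  have b: "raise_coeff l (m - 1) = sph_norm l (nat m - 1) / sph_norm l (nat m)"
    unfolding raise_coeff_def using True by (simp add: nat_diff_distrib)
  have c: "real (nat m) = of_int m"
    using True by simp
  show ?thesis
    unfolding a b c lower_raise_eigenvalue_def using sph_norm_pos[of l, THEN less_imp_neq]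
    by (simp add: field_simps)
next
  case False
  define k where "k = nat (- m)"
  have a: "raise_coeff l (- m) = sph_norm l k / sph_norm l (Suc k)"
    unfolding raise_coeff_def k_def using False by simp
  have "nat (- (m - 1)) = Suc k"
    using False by (simp add: k_def)
  then have b: "raise_coeff l (m - 1)
      = sph_norm l (Suc k) * (real l + real (Suc k)) * (real l - real (Suc k) + 1) / sph_norm l k"
    unfolding raise_coeff_def using False by simp
  have c: "real k = - of_int m"
    using False by (simp add: k_def)
  show ?thesis
    unfolding a b lower_raise_eigenvalue_def using c sph_norm_pos[of l, THEN less_imp_neq]
    by (simp add: field_simps)
qed

lemma ang_raise_ang_lower_Psi:
  assumes "\<bar>m\<bar> \<le> int l"
  shows "ang_raise opA (ang_lower opA (Psi l m n))
    = (\<lambda>u v. of_real (lower_raise_eigenvalue l m) * Psi l m n u v)"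
proof (cases "m = - int l")
  case True
  have "Psi l (m - 1) n = (\<lambda>u v. 0)"
    using True by (intro Psi_eq_0) simp
  then have "ang_lower opA (Psi l m n) = (\<lambda>u v. 0)"
    unfolding ang_lower_opA_Psi[OF assms] by simp
  moreover have "ang_raise opA (\<lambda>u v. 0) = (\<lambda>u v. 0)"
    using pdu_eq_derivative[of "\<lambda>u v. 0" v "\<lambda>_. 0" u for u v] by (simp add: fun_eq_iff ang_raise_def opA_def)
  ultimately show ?thesis
    using True by (simp add: lower_raise_eigenvalue_def)
next
  case False
  then have m: "\<bar>m - 1\<bar> \<le> int l" "- int l < m"
    using assms by auto
  have "ang_raise opA (ang_lower opA (Psi l m n))
      = ang_raise opA (lincomb {(l, m - 1, n)} psi (\<lambda>_. of_real (raise_coeff l (- m))))"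
    by (simp add: ang_lower_opA_Psi[OF assms] lincomb_singleton psi_def)
  also have "\<dots> = lincomb {(l, m - 1, n)} (\<lambda>s. ang_raise opA (psi s)) (\<lambda>_. of_real (raise_coeff l (- m)))"
    by (rule ang_raise_opA_lincomb) (simp_all add: psi_differentiable_u)
  also have "\<dots> = (\<lambda>u v. of_real (raise_coeff l (m - 1) * raise_coeff l (- m)) * Psi l m n u v)"
    by (simp add: lincomb_singleton psi_def ang_raise_opA_Psi[OF m(1)] mult_ac)
  finally show ?thesis
    unfolding raise_coeff_mult_raise_coeff_uminus[OF assms m(2)] .
qed

lemma ang_raise_ang_lower_lincomb_psi:
  assumes "finite T" "T \<subseteq> Psi_index"
  shows "ang_raise opA (ang_lower opA (lincomb T psi d)) = lincomb T psi
    (\<lambda>s. d s * (case s of (l, m, n) \<Rightarrow> of_real (lower_raise_eigenvalue l m)))"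
proof -
  have lower_diff: "(\<lambda>x. ang_lower opA (psi s) x v) differentiable (at u)" if "s \<in> T" "u \<noteq> 0" for s u v
  proof -
    obtain l m n where s: "s = (l, m, n)" and "\<bar>m\<bar> \<le> int l"
      using \<open>s \<in> T\<close> assms(2) by (cases s) (auto simp: Psi_index_def)
    then show ?thesis
      using \<open>u \<noteq> 0\<close> by (simp add: psi_def ang_lower_opA_Psi Psi_differentiable)
  qed
  have "ang_lower opA (lincomb T psi d) = lincomb T (\<lambda>s. ang_lower opA (psi s)) d"
    using assms(1) by (rule ang_lower_opA_lincomb) (rule psi_differentiable_u)
  moreover have "ang_raise opA (lincomb T (\<lambda>s. ang_lower opA (psi s)) d)
      = lincomb T (\<lambda>s. ang_raise opA (ang_lower opA (psi s))) d"
    using assms(1) lower_diff by (rule ang_raise_opA_lincomb)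
  moreover have "lincomb T (\<lambda>s. ang_raise opA (ang_lower opA (psi s))) d = lincomb T psi
    (\<lambda>s. d s * (case s of (l, m, n) \<Rightarrow> of_real (lower_raise_eigenvalue l m)))"
    using assms(2) by (intro lincomb_cong) (auto simp: psi_def Psi_index_def ang_raise_ang_lower_Psi)
  ultimately show ?thesis
    by simp
qed

section \<open>Invariant subspaces\<close>

lemma int_interval_ladder:
  fixes P :: "int \<Rightarrow> bool"
  assumes "P a" and "lo \<le> a" "a \<le> hi" and "lo \<le> b" "b \<le> hi"
    and up: "\<And>k. lo \<le> k \<Longrightarrow> k < hi \<Longrightarrow> P k \<Longrightarrow> P (k + 1)"
    and down: "\<And>k. lo < k \<Longrightarrow> k \<le> hi \<Longrightarrow> P k \<Longrightarrow> P (k - 1)"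
  shows "P b"
proof (cases "a \<le> b")
  case True
  have "k \<le> hi \<longrightarrow> P k" if "a \<le> k" for k
    using that by (induction k rule: int_ge_induct) (use assms in auto)
  with True assms show ?thesis
    by blast
next
  case False
  have "lo \<le> k \<longrightarrow> P k" if "k \<le> a" for k
    using that by (induction k rule: int_le_induct) (use assms in auto)
  with False assms show ?thesis
    by simp
qed

locale invariant_subspace =
  fixes W :: "phasefun set"
  assumes subspace: "complex_subspace W"
    and opA_mem: "f \<in> W \<Longrightarrow> opA i j f \<in> W"
    and opB_mem: "f \<in> W \<Longrightarrow> opB i j f \<in> W"
    and opC_mem: "f \<in> W \<Longrightarrow> opC i j f \<in> W"
begin

lemma zero_mem: "(\<lambda>u v. 0) \<in> W"
  using subspace by (simp add: complex_subspace_def)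

lemma scale_mem: "f \<in> W \<Longrightarrow> (\<lambda>u v. c * f u v) \<in> W"
  using subspace by (simp add: complex_subspace_def)

lemma add_mem: "f \<in> W \<Longrightarrow> g \<in> W \<Longrightarrow> (\<lambda>u v. f u v + g u v) \<in> W"
  using subspace by (simp add: complex_subspace_def)

lemma lincomb2_mem: "f \<in> W \<Longrightarrow> g \<in> W \<Longrightarrow> (\<lambda>u v. a * f u v + b * g u v) \<in> W"
  by (intro add_mem scale_mem)

lemma scale_mem_iff:
  assumes "c \<noteq> 0"
  shows "(\<lambda>u v. c * f u v) \<in> W \<longleftrightarrow> f \<in> W"
proof
  assume "(\<lambda>u v. c * f u v) \<in> W"
  then have "(\<lambda>u v. inverse c * (c * f u v)) \<in> W"
    by (rule scale_mem)
  moreover have "(\<lambda>u v. inverse c * (c * f u v)) = f"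
    using assms by (simp add: fun_eq_iff field_simps)
  ultimately show "f \<in> W"
    by simp
qed (rule scale_mem)

lemma lincomb_mem: "finite T \<Longrightarrow> (\<And>s. s \<in> T \<Longrightarrow> b s \<in> W) \<Longrightarrow> lincomb T b d \<in> W"
proof (induction T rule: finite_induct)
  case empty
  then show ?case
    by (simp add: lincomb_def zero_mem)
next
  case (insert s T)
  then have "(\<lambda>u v. d s * b s u v + 1 * lincomb T b d u v) \<in> W"
    by (intro lincomb2_mem) auto
  with insert show ?case
    by (simp add: lincomb_def)
qed

lemma ang_raise_mem:
  assumes "\<And>f i j. f \<in> W \<Longrightarrow> R i j f \<in> W" and "f \<in> W"
  shows "ang_raise R f \<in> W"
proof -
  have "(\<lambda>u v. 1 * R 2 3 f u v + \<i> * R 3 1 f u v) \<in> W"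
    by (intro lincomb2_mem assms)
  then show ?thesis
    by (simp add: ang_raise_def)
qed

lemma ang_lower_mem:
  assumes "\<And>f i j. f \<in> W \<Longrightarrow> R i j f \<in> W" and "f \<in> W"
  shows "ang_lower R f \<in> W"
proof -
  have "(\<lambda>u v. 1 * R 2 3 f u v + (- \<i>) * R 3 1 f u v) \<in> W"
    by (intro lincomb2_mem assms)
  then show ?thesis
    by (simp add: ang_lower_def)
qed

lemma C_raise_mem:
  assumes "f \<in> W"
  shows "C_raise f \<in> W"
proof -
  have "(\<lambda>u v. 1 * (1 * opC 1 1 f u v + \<i> * opC 1 2 f u v) + 1 * (\<i> * opC 2 1 f u v + (- 1) * opC 2 2 f u v)) \<in> W"
    by (intro lincomb2_mem opC_mem assms)
  then show ?thesis
    by (simp add: C_raise_def algebra_simps)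
qed

lemma C_lower_mem:
  assumes "f \<in> W"
  shows "C_lower f \<in> W"
proof -
  have "(\<lambda>u v. 1 * (1 * opC 1 1 f u v + (- \<i>) * opC 1 2 f u v) + 1 * ((- \<i>) * opC 2 1 f u v + (- 1) * opC 2 2 f u v)) \<in> W"
    by (intro lincomb2_mem opC_mem assms)
  then show ?thesis
    by (simp add: C_lower_def algebra_simps)
qed

lemma lincomb_eigen_product_mem:
  assumes D: "\<And>f. f \<in> W \<Longrightarrow> D f \<in> W"
    and diag: "\<And>d. D (lincomb T b d) = lincomb T b (\<lambda>s. d s * \<phi> s)"
    and mem: "lincomb T b d \<in> W" and "finite \<Lambda>"
  shows "lincomb T b (\<lambda>s. d s * (\<Prod>\<nu>\<in>\<Lambda>. \<phi> s - \<nu>)) \<in> W"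
  using \<open>finite \<Lambda>\<close>
proof (induction \<Lambda> rule: finite_induct)
  case empty
  then show ?case
    using mem by simp
next
  case (insert \<nu> \<Lambda>)
  define e where "e s = d s * (\<Prod>\<nu>\<in>\<Lambda>. \<phi> s - \<nu>)" for s
  have "lincomb T b (\<lambda>s. e s * \<phi> s) \<in> W"
    using D[OF insert.IH] unfolding diag e_def .
  then have "(\<lambda>u v. 1 * lincomb T b (\<lambda>s. e s * \<phi> s) u v + (- \<nu>) * lincomb T b e u v) \<in> W"
    using insert.IH unfolding e_def by (intro lincomb2_mem)
  moreover have "(\<lambda>u v. 1 * lincomb T b (\<lambda>s. e s * \<phi> s) u v + (- \<nu>) * lincomb T b e u v)
      = lincomb T b (\<lambda>s. d s * (\<Prod>\<nu>\<in>insert \<nu> \<Lambda>. \<phi> s - \<nu>))"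
    using insert.hyps
    by (simp add: lincomb_def e_def sum_distrib_left sum.distrib[symmetric] algebra_simps)
  ultimately show ?case
    by simp
qed

text \<open>Projection onto an eigenspace of \<open>D\<close> by the polynomial \<open>\<Prod>(D - \<nu>)\<close> over the
  other eigenvalues.\<close>
lemma eigenspace_projection_mem:
  assumes D: "\<And>f. f \<in> W \<Longrightarrow> D f \<in> W" and "finite T"
    and diag: "\<And>d. D (lincomb T b d) = lincomb T b (\<lambda>s. d s * \<phi> s)"
    and mem: "lincomb T b d \<in> W"
  shows "lincomb {s \<in> T. \<phi> s = \<mu>} b d \<in> W"
proof -
  define \<Lambda> where "\<Lambda> = \<phi> ` T - {\<mu>}"
  have fin: "finite \<Lambda>"
    using \<open>finite T\<close> by (simp add: \<Lambda>_def)
  define c where "c = (\<Prod>\<nu>\<in>\<Lambda>. \<mu> - \<nu>)"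
  have "c \<noteq> 0"
    using fin by (simp add: c_def \<Lambda>_def)
  have "lincomb T b (\<lambda>s. d s * (\<Prod>\<nu>\<in>\<Lambda>. \<phi> s - \<nu>)) = (\<lambda>u v. c * lincomb {s \<in> T. \<phi> s = \<mu>} b d u v)"
  proof (intro ext)
    fix u v
    have "(\<Prod>\<nu>\<in>\<Lambda>. \<phi> s - \<nu>) = (if \<phi> s = \<mu> then c else 0)" if "s \<in> T" for s
      using that fin by (auto simp: c_def \<Lambda>_def)
    then have "lincomb T b (\<lambda>s. d s * (\<Prod>\<nu>\<in>\<Lambda>. \<phi> s - \<nu>)) u v
        = (\<Sum>s\<in>T. c * (if \<phi> s = \<mu> then d s * b s u v else 0))"
      unfolding lincomb_def by (intro sum.cong) auto
    then show "lincomb T b (\<lambda>s. d s * (\<Prod>\<nu>\<in>\<Lambda>. \<phi> s - \<nu>)) u v = c * lincomb {s \<in> T. \<phi> s = \<mu>} b d u v"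
      using \<open>finite T\<close> by (simp add: lincomb_def sum.inter_filter sum_distrib_left)
  qed
  moreover have "lincomb T b (\<lambda>s. d s * (\<Prod>\<nu>\<in>\<Lambda>. \<phi> s - \<nu>)) \<in> W"
    using D diag mem fin by (rule lincomb_eigen_product_mem)
  ultimately show ?thesis
    using scale_mem_iff[OF \<open>c \<noteq> 0\<close>] by simp
qed

lemma Psi_mem_of_nonzero:
  assumes "f \<in> W" "f \<in> V_phys" "f \<noteq> (\<lambda>u v. 0)"
  obtains l m n where "Psi l m n \<in> W" "(l, m, n) \<in> Psi_index"
proof -
  obtain S c where S: "finite S" "S \<subseteq> Psi_index" and f: "f = lincomb S psi c"
    using assms(2) by (auto simp: mem_V_phys_iff)
  obtain l m n where s0: "(l, m, n) \<in> S" "c (l, m, n) \<noteq> 0"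
    using assms(3) unfolding f by (metis lincomb_nonzero_coeff prod_cases3)
  define T1 where "T1 = {s \<in> S. (case s of (l, m', n) \<Rightarrow> of_int m') = (of_int m :: complex)}"
  define T2 where "T2 = {s \<in> T1. (case s of (l, m, n') \<Rightarrow> of_int n') = (of_int n :: complex)}"
  define T3 where "T3 = {s \<in> T2. (case s of (l', m, n) \<Rightarrow> of_real (lower_raise_eigenvalue l' m))
      = (of_real (lower_raise_eigenvalue l m) :: complex)}"
  have T: "finite T1" "T1 \<subseteq> Psi_index" "finite T2" "T2 \<subseteq> Psi_index"
    using S by (auto simp: T1_def T2_def)
  have T1_mem: "lincomb T1 psi c \<in> W"
    unfolding T1_def
    by (rule eigenspace_projection_mem[OF _ S(1) opA_lincomb_psi[OF S]])
      (use assms(1) in \<open>simp_all add: opA_mem f\<close>)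
  have T2_mem: "lincomb T2 psi c \<in> W"
    unfolding T2_def
    by (rule eigenspace_projection_mem[OF _ T(1) opB_lincomb_psi[OF T(1,2)]]) (simp_all add: opB_mem T1_mem)
  have "lincomb T3 psi c \<in> W"
    unfolding T3_def
    by (rule eigenspace_projection_mem[OF _ T(3) ang_raise_ang_lower_lincomb_psi[OF T(3,4)]])
      (simp_all add: ang_raise_mem ang_lower_mem opA_mem T2_mem)
  moreover have "T3 = {(l, m, n)}"
    using s0(1) lower_raise_eigenvalue_inj by (auto simp: T1_def T2_def T3_def)
  ultimately have "(\<lambda>u v. c (l, m, n) * Psi l m n u v) \<in> W"
    by (simp add: lincomb_singleton psi_def)
  with s0 S(2) that show ?thesis
    using scale_mem_iff by blast
qed

lemma Psi_mem_raise_m: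
  assumes "Psi l m n \<in> W" "\<bar>m\<bar> \<le> int l"
  shows "Psi l (m + 1) n \<in> W"
proof -
  have "ang_raise opA (Psi l m n) \<in> W"
    by (rule ang_raise_mem) (simp_all add: opA_mem assms(1))
  then show ?thesis
    by (simp add: ang_raise_opA_Psi[OF assms(2)] scale_mem_iff raise_coeff_nonzero[OF assms(2)])
qed

lemma Psi_mem_lower_m:
  assumes "Psi l m n \<in> W" "\<bar>m\<bar> \<le> int l"
  shows "Psi l (m - 1) n \<in> W"
proof -
  have "ang_lower opA (Psi l m n) \<in> W"
    by (rule ang_lower_mem) (simp_all add: opA_mem assms(1))
  moreover have "raise_coeff l (- m) \<noteq> 0"
    using assms(2) by (intro raise_coeff_nonzero) simp
  ultimately show ?thesis
    by (simp add: ang_lower_opA_Psi[OF assms(2)] scale_mem_iff)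
qed

lemma Psi_mem_raise_n:
  assumes "Psi l m n \<in> W" "\<bar>n\<bar> \<le> int l"
  shows "Psi l m (n + 1) \<in> W"
proof -
  have "ang_raise opB (Psi l m n) \<in> W"
    by (rule ang_raise_mem) (simp_all add: opB_mem assms(1))
  then show ?thesis
    by (simp add: ang_raise_opB_Psi[OF assms(2)] scale_mem_iff raise_coeff_nonzero[OF assms(2)])
qed

lemma Psi_mem_lower_n:
  assumes "Psi l m n \<in> W" "\<bar>n\<bar> \<le> int l"
  shows "Psi l m (n - 1) \<in> W"
proof -
  have "ang_lower opB (Psi l m n) \<in> W"
    by (rule ang_lower_mem) (simp_all add: opB_mem assms(1))
  moreover have "raise_coeff l (- n) \<noteq> 0"
    using assms(2) by (intro raise_coeff_nonzero) simp
  ultimately show ?thesis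
    by (simp add: ang_lower_opB_Psi[OF assms(2)] scale_mem_iff)
qed

lemma Psi_mem_all_orders:
  assumes "Psi l m n \<in> W" "(l, m, n) \<in> Psi_index" "(l, m', n') \<in> Psi_index"
  shows "Psi l m' n' \<in> W"
proof -
  have bounds: "- int l \<le> m" "m \<le> int l" "- int l \<le> n" "n \<le> int l"
    "- int l \<le> m'" "m' \<le> int l" "- int l \<le> n'" "n' \<le> int l"
    using assms(2,3) by (auto simp: Psi_index_def)
  have "Psi l m' n \<in> W"
  proof (rule int_interval_ladder[where P = "\<lambda>k. Psi l k n \<in> W"])
    show "Psi l k n \<in> W \<Longrightarrow> Psi l (k + 1) n \<in> W" if "- int l \<le> k" "k < int l" for k
      using that by (intro Psi_mem_raise_m) auto
    show "Psi l k n \<in> W \<Longrightarrow> Psi l (k - 1) n \<in> W" if "- int l < k" "k \<le> int l" for k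
      using that by (intro Psi_mem_lower_m) auto
  qed (use assms(1) bounds in auto)
  then show ?thesis
  proof (rule int_interval_ladder[where P = "\<lambda>k. Psi l m' k \<in> W"])
    show "Psi l m' k \<in> W \<Longrightarrow> Psi l m' (k + 1) \<in> W" if "- int l \<le> k" "k < int l" for k
      using that by (intro Psi_mem_raise_n) auto
    show "Psi l m' k \<in> W \<Longrightarrow> Psi l m' (k - 1) \<in> W" if "- int l < k" "k \<le> int l" for k
      using that by (intro Psi_mem_lower_n) auto
  qed (use bounds in auto)
qed

lemma top_state_mem_iff: "top_state l \<in> W \<longleftrightarrow> Psi l (int l) (int l) \<in> W"
proof -
  have "(sph_norm l l * legendre_top l)\<^sup>2 \<noteq> 0"
    using sph_norm_pos[of l l] legendre_top_pos[of l] by simp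
  then show ?thesis
    by (simp add: Psi_top scale_mem_iff)
qed

lemma top_state_mem_Suc:
  assumes "top_state l \<in> W"
  shows "top_state (Suc l) \<in> W"
proof -
  have "(\<lambda>u v. of_nat (2 * l + 1) * top_state (Suc l) u v) \<in> W"
    using C_raise_mem[OF assms] unfolding C_raise_top_state .
  then show ?thesis
    by (rule scale_mem_iff[THEN iffD1, rotated]) (simp only: of_nat_eq_0_iff; simp)
qed

lemma top_state_mem_down:
  assumes "top_state (Suc k) \<in> W" "top_state (Suc (Suc k)) \<in> W"
  shows "top_state k \<in> W"
proof -
  have "Psi (Suc (Suc k)) (int k) (int k) \<in> W"
    using assms(2) unfolding top_state_mem_iff by (rule Psi_mem_all_orders) (auto simp: Psi_index_def)
  then have near: "near_top_state k \<in> W"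
    unfolding Psi_near_top
    by (rule scale_mem_iff[THEN iffD1, rotated]) (use near_top_coeff_pos[of k] in simp)
  have "(\<lambda>u v. of_nat (2 * k + 3) * C_lower (top_state (Suc k)) u v + (- 1) * near_top_state k u v) \<in> W"
    using C_lower_mem[OF assms(1)] near by (rule lincomb2_mem)
  then have "(\<lambda>u v. of_nat (4 * (Suc k)\<^sup>2) * top_state k u v) \<in> W"
    unfolding C_lower_top_state by simp
  then show ?thesis
    by (rule scale_mem_iff[THEN iffD1, rotated]) (simp only: of_nat_eq_0_iff; simp)
qed

lemma top_state_mem_all:
  assumes "top_state L \<in> W"
  shows "top_state l \<in> W"
proof -
  have up: "top_state (L + j) \<in> W" for j
    by (induction j) (simp_all add: assms top_state_mem_Suc)
  have "top_state n \<in> W \<and> top_state (Suc n) \<in> W" if "n \<le> L" for n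
    using that
  proof (induction n rule: inc_induct)
    case base
    show ?case
      using up[of 0] up[of 1] by simp
  next
    case (step n)
    then show ?case
      using top_state_mem_down by blast
  qed
  then show ?thesis
    using up[of "l - L"] by (cases "l \<le> L") auto
qed

lemma psi_mem_all:
  assumes "Psi l m n \<in> W" "(l, m, n) \<in> Psi_index" and "s \<in> Psi_index"
  shows "psi s \<in> W"
proof -
  have "top_state l \<in> W"
    unfolding top_state_mem_iff using assms(1,2) by (rule Psi_mem_all_orders) (simp add: Psi_index_def)
  then have top: "Psi k (int k) (int k) \<in> W" for k
    using top_state_mem_all top_state_mem_iff by blast
  obtain k m' n' where s: "s = (k, m', n')"
    by (cases s)
  show ?thesis
    using Psi_mem_all_orders[OF top[of k]] assms(3) by (simp add: s psi_def Psi_index_def)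
qed

lemma V_phys_subset:
  assumes "\<And>s. s \<in> Psi_index \<Longrightarrow> psi s \<in> W"
  shows "V_phys \<subseteq> W"
proof
  fix g
  assume "g \<in> V_phys"
  then obtain S c where S: "finite S" "S \<subseteq> Psi_index" and g: "g = lincomb S psi c"
    by (auto simp: mem_V_phys_iff)
  show "g \<in> W"
    unfolding g using S(1) by (rule lincomb_mem) (use S(2) assms in blast)
qed

end

theorem mainTheorem6:
  assumes "W \<subseteq> V_phys"
    and "complex_subspace W"
    and "W \<noteq> {\<lambda>u v. 0}"
    and "\<forall>i j. \<forall>f\<in>W. opA i j f \<in> W \<and> opB i j f \<in> W \<and> opC i j f \<in> W"
  shows "W = V_phys"
proof -
  interpret invariant_subspace W
    using assms(2,4) by unfold_locales blast+
  obtain f where "f \<in> W" "f \<noteq> (\<lambda>u v. 0)"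
    using assms(3) zero_mem by blast
  then obtain l m n where "Psi l m n \<in> W" "(l, m, n) \<in> Psi_index"
    using assms(1) Psi_mem_of_nonzero by blast
  then have "V_phys \<subseteq> W"
    by (intro V_phys_subset psi_mem_all)
  with assms(1) show ?thesis
    by blast
qed

end
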